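(* Every weakly contig-preserving assembly graph is splitting. Every splitting, non-redundant assembly graph is weakly contig-preserving.
   Context: All strings are over a fixed finite alphabet $\Sigma$. A cyclic string is a bi-infinite periodic word $\mathbb{Z}\to\Sigma$, considered up to shifting indices; for a nonempty finite string $x$, $\langle x\rangle$ is the cyclic string repeating $x$ in both directions. Finite substrings of cyclic strings are contiguous blocks; a cyclic string is a substring only of itself. A string $u$ is a proper infix of $w$ if $w=aub$ with $a,b$ nonempty. An abstract assembly graph is a finite directed multigraph in which each vertex and edge carries a label (a finite or cyclic string) such that for every edge $e$ from $u$ to $v$, $Label(u)$ is a prefix and $Label(v)$ a suffix of $Label(e)$. An edge $e$ from $u$ to $v$ is a prefix edge if $Label(e)=Label(v)$, a suffix edge if $Label(e)=Label(u)$. An assembly graph is an abstract assembly graph in which every vertex and edge lies on a directed cycle and no edge is both a prefix and a suffix edge. The label of a walk $v_0,e_1,\dots,e_n,v_n$ is $Label(e_1)$ followed, for $i\ge 2$, by $Label(e_i)$ with its first $|Label(v_{i-1})|$ characters removed; a walk with no edges has its vertex label. A circuit is a primitive closed walk up to rotation; if its walk label is $Label(v_0)x$, its label is $\langle x\rangle$. $P$ is an inner subwalk of $Q$ if $Q=APB$ with walks $A,B$ each having at least one edge. The graph is non-redundant if whenever $Label(P)$ is a proper infix of $Label(Q)$ for walks $P,Q$, $P$ is an inner subwalk of $Q$. The graph is splitting if for every vertex $v$ and any two distinct edges $e_1,e_2$ leaving $v$, the longest common prefix of $Label(e_1)$ and $Label(e_2)$ is $Label(v)$, and for every vertex $u$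 and any two distinct edges entering $u$, the longest common suffix of their labels is $Label(u)$ (labels diverge immediately after/before the shared vertex label). A genome path candidate is a finite collection of circuits; a genome candidate is a finite collection of cyclic strings, and $Labels$ maps a genome path candidate to the genome candidate of its circuit labels (and sets of walks/candidates elementwise). For a set $\mathfrak{P}$ of genome path candidates, $\mathrm{OGA}(\mathfrak{P})$ is the set of walks that are subwalks (traversals of consecutive vertices and edges, possibly wrapping around) of some circuit of every candidate in $\mathfrak{P}$ and are maximal with this property under the subwalk relation. For a set $\mathfrak{C}$ of genome candidates, $\mathrm{OA}(\mathfrak{C})$ is the set of strings that are substrings of some element of every candidate in $\mathfrak{C}$ and are maximal with this property under the substring relation. An assembly graph is weakly contig-preserving if for every set $\mathfrak{P}$ of genome path candidates, $Labels(\mathrm{OGA}(\mathfrak{P}))\subseteq \mathrm{OA}(Labels(\mathfrak{P}))$. *)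

theory Defs
  imports Main "HOL-Library.Sublist"
begin

text \<open>The bi-infinite periodic word repeating x, as a function int => 'a, together
 with all its shifts (cyclic strings are considered up to shifting indices).\<close>
definition cyc_set :: "'a list \<Rightarrow> (int \<Rightarrow> 'a) set" where
  "cyc_set x = {f. \<exists>k::int. f = (\<lambda>i. x ! nat ((i + k) mod int (length x)))}"

typedef 'a cstr = "{S :: (int \<Rightarrow> 'a) set. \<exists>x. x \<noteq> [] \<and> S = cyc_set x}"
  by (rule exI[of _ "cyc_set [undefined]"]) auto

definition cyc :: "'a list \<Rightarrow> 'a cstr" where
  "cyc x = Abs_cstr (cyc_set x)"

datatype 'a label = Fin "'a list" | Cyc "'a cstr"

fun lprefix :: "'a label \<Rightarrow> 'a label \<Rightarrow> bool" where
  "lprefix (Fin x) (Fin y) = prefix x y"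
| "lprefix (Cyc c) (Cyc d) = (c = d)"
| "lprefix _ _ = False"

fun lsuffix :: "'a label \<Rightarrow> 'a label \<Rightarrow> bool" where
  "lsuffix (Fin x) (Fin y) = suffix x y"
| "lsuffix (Cyc c) (Cyc d) = (c = d)"
| "lsuffix _ _ = False"

fun lsubstr :: "'a label \<Rightarrow> 'a label \<Rightarrow> bool" where
  "lsubstr (Fin x) (Fin y) = sublist x y"
| "lsubstr (Fin x) (Cyc c) =
     (\<exists>f \<in> Rep_cstr c. \<exists>k::int. x = map (\<lambda>i. f (k + int i)) [0..<length x])"
| "lsubstr (Cyc c) (Cyc d) = (c = d)"
| "lsubstr (Cyc c) (Fin y) = False"

fun lproper_infix :: "'a label \<Rightarrow> 'a label \<Rightarrow> bool" where
  "lproper_infix (Fin u) (Fin w) = (\<exists>a b. a \<noteq> [] \<and> b \<noteq> [] \<and> w = a @ u @ b)"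
| "lproper_infix _ _ = False"

text \<open>Auxiliary operations (the cyclic cases never arise in assembly graphs).\<close>
fun llen :: "'a label \<Rightarrow> nat" where
  "llen (Fin x) = length x" | "llen (Cyc c) = 0"

fun lstr :: "'a label \<Rightarrow> 'a list" where
  "lstr (Fin x) = x" | "lstr (Cyc c) = []"

fun lapp :: "'a label \<Rightarrow> 'a list \<Rightarrow> 'a label" where
  "lapp (Fin x) y = Fin (x @ y)" | "lapp (Cyc c) y = Cyc c"

fun llcp :: "'a label \<Rightarrow> 'a label \<Rightarrow> 'a label" where
  "llcp (Fin x) (Fin y) = Fin (longest_common_prefix x y)"
| "llcp a b = (if a = b then a else Fin [])"

fun llcs :: "'a label \<Rightarrow> 'a label \<Rightarrow> 'a label" where
  "llcs (Fin x) (Fin y) = Fin (rev (longest_common_prefix (rev x) (rev y)))"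
| "llcs a b = (if a = b then a else Fin [])"

record ('v, 'e, 'a) agraph =
  verts :: "'v set"
  arcs  :: "'e set"
  tail  :: "'e \<Rightarrow> 'v"
  head  :: "'e \<Rightarrow> 'v"
  vlab  :: "'v \<Rightarrow> 'a label"
  elab  :: "'e \<Rightarrow> 'a label"

definition abstract_assembly_graph :: "('v, 'e, 'a) agraph \<Rightarrow> bool" where
  "abstract_assembly_graph G \<longleftrightarrow> finite (verts G) \<and> finite (arcs G) \<and>
     (\<forall>e \<in> arcs G. tail G e \<in> verts G \<and> head G e \<in> verts G \<and>
        lprefix (vlab G (tail G e)) (elab G e) \<and> lsuffix (vlab G (head G e)) (elab G e))"

fun is_walk :: "('v, 'e, 'a) agraph \<Rightarrow> 'v \<Rightarrow> 'e list \<Rightarrow> bool" where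
  "is_walk G v [] = (v \<in> verts G)"
| "is_walk G v (e # es) =
     (v \<in> verts G \<and> e \<in> arcs G \<and> tail G e = v \<and> is_walk G (head G e) es)"

definition walk_end :: "('v, 'e, 'a) agraph \<Rightarrow> 'v \<Rightarrow> 'e list \<Rightarrow> 'v" where
  "walk_end G v es = (if es = [] then v else head G (last es))"

definition walk_verts :: "('v, 'e, 'a) agraph \<Rightarrow> 'v \<Rightarrow> 'e list \<Rightarrow> 'v list" where
  "walk_verts G v es = v # map (head G) es"

definition is_dcycle :: "('v, 'e, 'a) agraph \<Rightarrow> 'v \<Rightarrow> 'e list \<Rightarrow> bool" where
  "is_dcycle G v es \<longleftrightarrow> es \<noteq> [] \<and> is_walk G v es \<and> walk_end G v es = v \<and>
     distinct (map (tail G) es)"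

definition prefix_edge :: "('v, 'e, 'a) agraph \<Rightarrow> 'e \<Rightarrow> bool" where
  "prefix_edge G e \<longleftrightarrow> elab G e = vlab G (head G e)"

definition suffix_edge :: "('v, 'e, 'a) agraph \<Rightarrow> 'e \<Rightarrow> bool" where
  "suffix_edge G e \<longleftrightarrow> elab G e = vlab G (tail G e)"

definition assembly_graph :: "('v, 'e, 'a) agraph \<Rightarrow> bool" where
  "assembly_graph G \<longleftrightarrow> abstract_assembly_graph G \<and>
     (\<forall>x \<in> verts G. \<exists>v es. is_dcycle G v es \<and> x \<in> set (walk_verts G v es)) \<and>
     (\<forall>e \<in> arcs G. \<exists>v es. is_dcycle G v es \<and> e \<in> set es) \<and>
     (\<forall>e \<in> arcs G. \<not> (prefix_edge G e \<and> suffix_edge G e))"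

fun wlab_aux :: "('v, 'e, 'a) agraph \<Rightarrow> 'a label \<Rightarrow> 'v \<Rightarrow> 'e list \<Rightarrow> 'a label" where
  "wlab_aux G acc v [] = acc"
| "wlab_aux G acc v (e # es) =
     wlab_aux G (lapp acc (drop (llen (vlab G v)) (lstr (elab G e)))) (head G e) es"

text \<open>Label(e1), followed for i >= 2 by Label(e_i) with its first |Label(v_(i-1))| characters removed.\<close>
definition walk_label :: "('v, 'e, 'a) agraph \<Rightarrow> 'v \<Rightarrow> 'e list \<Rightarrow> 'a label" where
  "walk_label G v es = (case es of [] \<Rightarrow> vlab G v | e # es' \<Rightarrow> wlab_aux G (elab G e) (head G e) es')"

text \<open>A circuit is a primitive closed walk up to rotation; it is represented by the edge
 list of any of its rotations (all notions below are rotation invariant).\<close>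
definition is_circuit :: "('v, 'e, 'a) agraph \<Rightarrow> 'e list \<Rightarrow> bool" where
  "is_circuit G cs \<longleftrightarrow> cs \<noteq> [] \<and> is_walk G (tail G (hd cs)) cs \<and>
     head G (last cs) = tail G (hd cs) \<and>
     \<not> (\<exists>ys k. k \<ge> 2 \<and> cs = concat (replicate k ys))"

definition circ_label :: "('v, 'e, 'a) agraph \<Rightarrow> 'e list \<Rightarrow> 'a cstr" where
  "circ_label G cs =
     cyc (drop (llen (vlab G (tail G (hd cs)))) (lstr (walk_label G (tail G (hd cs)) cs)))"

definition inner_subwalk :: "('v, 'e, 'a) agraph \<Rightarrow> 'v \<Rightarrow> 'e list \<Rightarrow> 'v \<Rightarrow> 'e list \<Rightarrow> bool" where
  "inner_subwalk G v es v' es' \<longleftrightarrow>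
     (\<exists>as bs. as \<noteq> [] \<and> bs \<noteq> [] \<and> es' = as @ es @ bs \<and> v = walk_end G v' as)"

definition non_redundant :: "('v, 'e, 'a) agraph \<Rightarrow> bool" where
  "non_redundant G \<longleftrightarrow> (\<forall>v es v' es'. is_walk G v es \<and> is_walk G v' es' \<and>
     lproper_infix (walk_label G v es) (walk_label G v' es') \<longrightarrow> inner_subwalk G v es v' es')"

definition splitting :: "('v, 'e, 'a) agraph \<Rightarrow> bool" where
  "splitting G \<longleftrightarrow>
     (\<forall>v \<in> verts G. \<forall>e1 \<in> arcs G. \<forall>e2 \<in> arcs G.
        e1 \<noteq> e2 \<and> tail G e1 = v \<and> tail G e2 = v \<longrightarrow> llcp (elab G e1) (elab G e2) = vlab G v) \<and>
     (\<forall>u \<in> verts G. \<forall>e1 \<in> arcs G. \<forall>e2 \<in> arcs G.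
        e1 \<noteq> e2 \<and> head G e1 = u \<and> head G e2 = u \<longrightarrow> llcs (elab G e1) (elab G e2) = vlab G u)"

datatype ('v, 'e) wobj = Walk 'v "'e list" | Circ "'e list"

fun valid_wobj :: "('v, 'e, 'a) agraph \<Rightarrow> ('v, 'e) wobj \<Rightarrow> bool" where
  "valid_wobj G (Walk v es) = is_walk G v es"
| "valid_wobj G (Circ cs) = is_circuit G cs"

definition sub_ww :: "('v, 'e, 'a) agraph \<Rightarrow> 'v \<Rightarrow> 'e list \<Rightarrow> 'v \<Rightarrow> 'e list \<Rightarrow> bool" where
  "sub_ww G v es v' es' \<longleftrightarrow> (\<exists>as bs. es' = as @ es @ bs \<and> v = walk_end G v' as)"

text \<open>Subwalk relation; subwalks of circuits may wrap around (arbitrarily often).\<close>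
fun subwalk :: "('v, 'e, 'a) agraph \<Rightarrow> ('v, 'e) wobj \<Rightarrow> ('v, 'e) wobj \<Rightarrow> bool" where
  "subwalk G (Walk v es) (Walk v' es') = sub_ww G v es v' es'"
| "subwalk G (Walk v es) (Circ cs) =
     (\<exists>n. sub_ww G v es (tail G (hd cs)) (concat (replicate n cs)))"
| "subwalk G (Circ cs') (Circ cs) = (\<exists>n. cs' = rotate n cs)"
| "subwalk G (Circ cs') (Walk v es) = False"

fun obj_label :: "('v, 'e, 'a) agraph \<Rightarrow> ('v, 'e) wobj \<Rightarrow> 'a label" where
  "obj_label G (Walk v es) = walk_label G v es"
| "obj_label G (Circ cs) = Cyc (circ_label G cs)"

definition genome_path_candidate :: "('v, 'e, 'a) agraph \<Rightarrow> 'e list set \<Rightarrow> bool" where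
  "genome_path_candidate G P \<longleftrightarrow> finite P \<and> (\<forall>c \<in> P. is_circuit G c)"

definition Labels_gpc :: "('v, 'e, 'a) agraph \<Rightarrow> 'e list set \<Rightarrow> 'a cstr set" where
  "Labels_gpc G P = circ_label G ` P"

definition OGA :: "('v, 'e, 'a) agraph \<Rightarrow> 'e list set set \<Rightarrow> ('v, 'e) wobj set" where
  "OGA G PP = {w. valid_wobj G w \<and> (\<forall>P \<in> PP. \<exists>c \<in> P. subwalk G w (Circ c)) \<and>
     (\<forall>w'. valid_wobj G w' \<and> (\<forall>P \<in> PP. \<exists>c \<in> P. subwalk G w' (Circ c)) \<and> subwalk G w w'
            \<longrightarrow> subwalk G w' w)}"

definition OA :: "'a cstr set set \<Rightarrow> 'a label set" where
  "OA CC = {s. (\<forall>C \<in> CC. \<exists>c \<in> C. lsubstr s (Cyc c)) \<and>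
     (\<forall>t. (\<forall>C \<in> CC. \<exists>c \<in> C. lsubstr t (Cyc c)) \<and> lsubstr s t \<longrightarrow> lsubstr t s)}"

definition weakly_contig_preserving :: "('v, 'e, 'a) agraph \<Rightarrow> bool" where
  "weakly_contig_preserving G \<longleftrightarrow>
     (\<forall>PP. (\<forall>P \<in> PP. genome_path_candidate G P) \<longrightarrow>
        obj_label G ` OGA G PP \<subseteq> OA (Labels_gpc G ` PP))"

end

theory Submission
  imports Defs
begin

(* In an assembly graph all labels are finite strings, and the label of an arc from u to v is
   Label(u) x = y Label(v); a walk spells Label(v0) followed by the extensions x of its arcs, and
   a circuit spells the cyclic word of these extensions.

   If two arcs leaving (entering) a vertex v agree on the first character after (the last
   character before) Label(v), take circuits through them with no repeated vertex. The longest
   walk common to both circuits and ending (starting) at v is a maximal common walk, yet its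
   label extended by that character is still a substring of both circuit labels, so weak
   contig-preservation fails.

   Conversely, let W be a maximal common subwalk of the candidates. A common string strictly
   containing Label(W) contains a one-character extension of it in every candidate.
   Non-redundancy aligns each such occurrence with a copy of W in the circuit, and splitting
   forces all circuits to continue W through the same arc, contradicting the maximality of W. *)

abbreviation repeat :: "nat \<Rightarrow> 'b list \<Rightarrow> 'b list" where
  "repeat n xs \<equiv> concat (replicate n xs)"

lemma length_repeat [simp]: "length (repeat n xs) = n * length xs"
  by (induction n) auto

lemma set_repeat_subset: "set (repeat n xs) \<subseteq> set xs"
  by (induction n) auto

lemma map_concat_repeat: "concat (map f (repeat n xs)) = repeat n (concat (map f xs))"
  by (induction n) auto

lemma repeat_Suc_right: "repeat (Suc n) xs = repeat n xs @ xs"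
  by (induction n) auto

lemma nth_repeat: "i < n * length xs \<Longrightarrow> repeat n xs ! i = xs ! (i mod length xs)"
proof (induction n arbitrary: i)
  case (Suc n)
  show ?case
  proof (cases "i < length xs")
    case False
    then have "repeat n xs ! (i - length xs) = xs ! ((i - length xs) mod length xs)"
      using Suc by (intro Suc.IH) auto
    then show ?thesis using False by (simp add: nth_append le_mod_geq)
  qed (simp add: nth_append)
qed simp

lemma set_subset_of_long_infix_repeat:
  assumes "repeat n xs = as @ ys @ bs" and "length xs \<le> length ys"
  shows "set xs \<subseteq> set ys"
proof
  fix x assume "x \<in> set xs"
  then obtain j where j: "j < length xs" "xs ! j = x" by (metis in_set_conv_nth)
  define m where "m = length xs"
  define i where "i = (j + m - length as mod m) mod m"
  have m: "m > 0" using j(1) unfolding m_def by linarith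
  have i: "i < length ys"
    using assms(2) m unfolding i_def m_def by (meson le_trans mod_less_divisor not_le)
  have "length as + i < n * m"
    using assms(1) i unfolding m_def
      by (metis length_repeat length_append add_less_cancel_left trans_less_add1 add.assoc)
  then have "ys ! i = xs ! ((length as + i) mod m)"
    using assms(1) i nth_repeat[of "length as + i" n xs] unfolding m_def by (simp add: nth_append)
  also have "(length as + i) mod m = j"
  proof -
    have "length as mod m < m" using m by simp
    then have "length as mod m + (j + m - length as mod m) = j + m" by simp
    then have "(length as + i) mod m = (j + m) mod m"
      unfolding i_def by (metis mod_add_left_eq mod_add_right_eq)
    then show ?thesis using j(1) unfolding m_def by simp
  qed
  finally show "x \<in> set ys" using i j(2) by (metis nth_mem)
qed

lemma concat_map_neq_Nil_first:
  assumes "concat (map g xs) \<noteq> []"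
  obtains rs x rest where "xs = rs @ x # rest" and "g x \<noteq> []" and "\<forall>e\<in>set rs. g e = []"
proof -
  have "\<exists>e\<in>set xs. g e \<noteq> []" using assms by (induction xs) auto
  then show thesis using that by (elim split_list_first_propE) auto
qed

lemma concat_map_neq_Nil_last:
  assumes "concat (map g xs) \<noteq> []"
  obtains rest x rs where "xs = rest @ x # rs" and "g x \<noteq> []" and "\<forall>e\<in>set rs. g e = []"
proof -
  have "\<exists>e\<in>set xs. g e \<noteq> []" using assms by (induction xs) auto
  then show thesis using that by (elim split_list_last_propE) auto
qed

lemma longest_common_prefix_of_prefix: "prefix xs ys \<Longrightarrow> longest_common_prefix ys xs = xs"
  by (simp add: longest_common_prefix_max_prefix longest_common_prefix_prefix2 prefix_order.antisym)

lemma longest_common_prefix_append: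
  "longest_common_prefix (xs @ ys) (xs @ zs) = xs @ longest_common_prefix ys zs"
  by (induction xs) auto

lemma longest_common_prefix_neq_Nil:
  "longest_common_prefix xs ys \<noteq> [] \<Longrightarrow> \<exists>c xs' ys'. xs = c # xs' \<and> ys = c # ys'"
  by (cases xs; cases ys) (auto split: if_splits)

lemma sublist_proper_extend:
  assumes "sublist s t" and "s \<noteq> t"
  obtains c where "sublist (s @ [c]) t \<or> sublist (c # s) t"
proof -
  obtain p q where t: "t = p @ s @ q" using assms(1) unfolding sublist_def by blast
  show thesis
  proof (cases q)
    case (Cons c q')
    then have "sublist (s @ [c]) t"
      using t by (metis append.assoc append_Cons append_Nil sublist_appendI)
    then show thesis using that by blast
  next
    case Nil
    then obtain p' c where "p = p' @ [c]" using t assms(2) by (cases p rule: rev_cases) auto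
    then have "sublist (c # s) t"
      using t Nil by (metis append.assoc append_Cons append_Nil sublist_appendI)
    then show thesis using that by blast
  qed
qed

section \<open>Cyclic strings\<close>

lemma Rep_cstr_cyc: "x \<noteq> [] \<Longrightarrow> Rep_cstr (cyc x) = cyc_set x"
  unfolding cyc_def by (rule Abs_cstr_inverse) auto

lemma cyc_set_rotate_subset: "cyc_set (rotate m x) \<subseteq> cyc_set x"
proof
  fix f assume "f \<in> cyc_set (rotate m x)"
  then obtain k where f: "f = (\<lambda>i. rotate m x ! nat ((i + k) mod int (length x)))"
    unfolding cyc_set_def by auto
  show "f \<in> cyc_set x"
  proof (cases "x = []")
    case False
    have "f i = x ! nat ((i + (k + int m)) mod int (length x))" for i
    proof -
      define j where "j = nat ((i + k) mod int (length x))"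
      have j: "j < length x" "int j = (i + k) mod int (length x)"
        using False unfolding j_def by (simp_all add: nat_less_iff)
      have "f i = x ! ((m + j) mod length x)" using j(1) f unfolding j_def by (simp add: nth_rotate)
      also have "int ((m + j) mod length x) = (i + (k + int m)) mod int (length x)"
        using j(2) by (simp add: of_nat_mod mod_add_right_eq ac_simps)
      then have "(m + j) mod length x = nat ((i + (k + int m)) mod int (length x))" by linarith
      finally show ?thesis .
    qed
    then show ?thesis unfolding cyc_set_def by blast
  next
    case True
    then have "f = (\<lambda>i. x ! nat ((i + k) mod int (length x)))" using f by simp
    then show ?thesis unfolding cyc_set_def by blast
  qed
qed

lemma cyc_rotate: "cyc (rotate m x) = cyc x"
proof -
  define n where "n = length x"
  have "rotate (n - m mod n) (rotate m x) = x"
  proof (cases "n = 0")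
    case False
    have "(n - m mod n + m) mod n = (n - m mod n + m mod n) mod n" by (simp only: mod_add_right_eq)
    also have "\<dots> = 0" using False by simp
    finally have "(n - m mod n + m) mod n = 0" .
    then show ?thesis by (metis rotate_rotate rotate_conv_mod rotate0 id_apply n_def)
  qed (simp add: n_def)
  then have "cyc_set x \<subseteq> cyc_set (rotate m x)" using cyc_set_rotate_subset by metis
  then show ?thesis using cyc_set_rotate_subset[of m x] unfolding cyc_def by (metis subset_antisym)
qed

lemma cyc_append_swap: "cyc (a @ b) = cyc (b @ a)"
  by (metis cyc_rotate rotate_append)

lemma cyc_concat_map_rotate: "cyc (concat (map g (rotate n c))) = cyc (concat (map g c))"
proof (induction n)
  case (Suc n)
  have "cyc (concat (map g (rotate1 xs))) = cyc (concat (map g xs))" for xs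
    by (cases xs) (simp_all add: cyc_append_swap)
  then show ?case using Suc by simp
qed simp

definition cyc_occ :: "'a list \<Rightarrow> 'a list \<Rightarrow> nat \<Rightarrow> bool" where
  "cyc_occ t x k \<longleftrightarrow> (\<forall>i<length t. t ! i = x ! ((k + i) mod length x))"

lemma lsubstr_Fin_cyc_iff:
  assumes "x \<noteq> []"
  shows "lsubstr (Fin t) (Cyc (cyc x)) \<longleftrightarrow> (\<exists>k. cyc_occ t x k)"
proof
  assume "lsubstr (Fin t) (Cyc (cyc x))"
  then obtain k k' where
    t: "t = map (\<lambda>i. x ! nat ((k + int i + k') mod int (length x))) [0..<length t]"
    using Rep_cstr_cyc[OF assms] by (auto simp: cyc_set_def)
  have "cyc_occ t x (nat ((k + k') mod int (length x)))"
    unfolding cyc_occ_def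
  proof (intro allI impI)
    fix i assume i: "i < length t"
    have "int ((nat ((k + k') mod int (length x)) + i) mod length x) =
        ((k + k') mod int (length x) + int i) mod int (length x)"
      using assms by (simp add: of_nat_mod)
    also have "\<dots> = (k + int i + k') mod int (length x)"
      by (metis mod_add_left_eq add.commute add.left_commute)
    finally have "int ((nat ((k + k') mod int (length x)) + i) mod length x) =
        (k + int i + k') mod int (length x)" .
    then show "t ! i = x ! ((nat ((k + k') mod int (length x)) + i) mod length x)"
      using i by (subst t) (simp, metis nat_int)
  qed
  then show "\<exists>k. cyc_occ t x k" by blast
next
  assume "\<exists>k. cyc_occ t x k"
  then obtain k where k: "cyc_occ t x k" by blast
  define f where "f = (\<lambda>i::int. x ! nat (i mod int (length x)))"
  have "t = map (\<lambda>i. f (int k + int i)) [0..<length t]"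
    using k unfolding cyc_occ_def f_def
      by (intro nth_equalityI) (simp_all flip: of_nat_add of_nat_mod)
  moreover have "f \<in> Rep_cstr (cyc x)"
    unfolding Rep_cstr_cyc[OF assms] cyc_set_def f_def by (intro CollectI exI[of _ 0]) simp
  ultimately show "lsubstr (Fin t) (Cyc (cyc x))" by auto
qed

lemma cyc_occ_of_infix_repeat:
  assumes eq: "w @ repeat n x = p @ s @ q" and le: "length w \<le> length p"
  shows "cyc_occ s x (length p - length w)"
  unfolding cyc_occ_def
proof (intro allI impI)
  fix i assume i: "i < length s"
  have len: "length w + n * length x = length p + length s + length q"
    using arg_cong[OF eq, of length] by simp
  have "s ! i = (w @ repeat n x) ! (length p + i)" using i eq by (simp add: nth_append)
  also have "\<dots> = repeat n x ! (length p - length w + i)" using le by (simp add: nth_append)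
  also have "\<dots> = x ! ((length p - length w + i) mod length x)"
    using i len le by (intro nth_repeat) linarith
  finally show "s ! i = x ! ((length p - length w + i) mod length x)" .
qed

lemma infix_repeat_of_cyc_occ:
  assumes x: "x \<noteq> []" and occ: "cyc_occ t x k"
  obtains n \<alpha> \<beta> where "w @ repeat n x = \<alpha> @ t @ \<beta>" and "\<alpha> \<noteq> []" and "\<beta> \<noteq> []"
proof -
  define m where "m = length x"
  define n where "n = length t + 3"
  define R where "R = repeat n x"
  define p where "p = m + k mod m"
  have m: "m > 0" using x unfolding m_def by simp
  have "length R = length t * m + 3 * m" unfolding R_def n_def m_def by (simp add: algebra_simps)
  moreover have "length t \<le> length t * m" and "k mod m < m" using m by simp_all
  ultimately have big: "p + length t < length R" unfolding p_def by linarith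
  have mid: "take (length t) (drop p R) = t"
  proof (rule nth_equalityI)
    fix i assume "i < length (take (length t) (drop p R))"
    then have i: "i < length t" by simp
    have "take (length t) (drop p R) ! i = x ! ((p + i) mod m)"
      using i big unfolding R_def m_def by (simp add: nth_repeat)
    also have "(p + i) mod m = (k mod m + i) mod m" unfolding p_def by (simp add: add.assoc)
    also have "\<dots> = (k + i) mod m" by (rule mod_add_left_eq)
    finally show "take (length t) (drop p R) ! i = t ! i"
      using occ i unfolding cyc_occ_def m_def by simp
  qed (use big in simp)
  have "R = take p R @ t @ drop (p + length t) R"
    by (metis mid append_take_drop_id drop_drop add.commute)
  then have "w @ repeat n x = (w @ take p R) @ t @ drop (p + length t) R" unfolding R_def by simp
  moreover have "w @ take p R \<noteq> []" and "drop (p + length t) R \<noteq> []"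
    using big m unfolding p_def by auto
  ultimately show thesis using that by blast
qed

lemma lsubstr_Fin_Cyc_sublist:
  assumes "lsubstr (Fin t) (Cyc c)" and "sublist s t"
  shows "lsubstr (Fin s) (Cyc c)"
proof -
  obtain f k where f: "f \<in> Rep_cstr c" and t: "t = map (\<lambda>i. f (k + int i)) [0..<length t]"
    using assms(1) by auto
  obtain p q where pq: "t = p @ s @ q" using assms(2) unfolding sublist_def by blast
  have "s = map (\<lambda>i. f (k + int (length p) + int i)) [0..<length s]"
  proof (rule nth_equalityI)
    fix i assume "i < length s"
    then have "s ! i = t ! (length p + i)" and "length p + i < length t"
      using pq by (simp_all add: nth_append)
    then show "s ! i = map (\<lambda>i. f (k + int (length p) + int i)) [0..<length s] ! i"
      using \<open>i < length s\<close> by (subst (asm) t) (simp add: ac_simps)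
  qed simp
  then show ?thesis using f by auto
qed

lemma lsubstr_trans: "lsubstr r s \<Longrightarrow> lsubstr s t \<Longrightarrow> lsubstr r t"
proof (cases r; cases s; cases t)
  fix x y c assume "lsubstr r s" "lsubstr s t" "r = Fin x" "s = Fin y" "t = Cyc c"
  then show "lsubstr r t" using lsubstr_Fin_Cyc_sublist by simp
qed (auto intro: sublist_order.order.trans)

lemma lsubstr_Fin_Cyc_snoc:
  assumes "lsubstr (Fin s) (Cyc c)"
  obtains ch where "lsubstr (Fin (s @ [ch])) (Cyc c)"
proof -
  obtain f k where f: "f \<in> Rep_cstr c" and s: "s = map (\<lambda>i. f (k + int i)) [0..<length s]"
    using assms by auto
  have "s @ [f (k + int (length s))] =
      map (\<lambda>i. f (k + int i)) [0..<length (s @ [f (k + int (length s))])]"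
    by (subst s) simp
  then show thesis using f that by fastforce
qed

lemma lsubstr_Fin_proper_extend:
  assumes "lsubstr (Fin s) t" and "\<not> lsubstr t (Fin s)"
  obtains ch where "lsubstr (Fin (s @ [ch])) t \<or> lsubstr (Fin (ch # s)) t"
proof (cases t)
  case (Fin t')
  then show thesis using assms sublist_proper_extend[of s t'] that by auto
next
  case (Cyc c)
  then show thesis using assms lsubstr_Fin_Cyc_snoc that by blast
qed

section \<open>Walks and circuits\<close>

lemma is_walk_start: "is_walk G v es \<Longrightarrow> v \<in> verts G"
  by (cases es) auto

lemma is_walk_arcs: "is_walk G v es \<Longrightarrow> set es \<subseteq> arcs G"
  by (induction es arbitrary: v) auto

lemma is_walk_append: "is_walk G v (xs @ ys) \<longleftrightarrow> is_walk G v xs \<and> is_walk G (walk_end G v xs) ys"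
  by (induction xs arbitrary: v) (auto simp: walk_end_def is_walk_start)

lemma walk_end_append: "walk_end G v (xs @ ys) = walk_end G (walk_end G v xs) ys"
  by (auto simp: walk_end_def)

lemma walk_end_Cons: "walk_end G v (e # es) = walk_end G (head G e) es"
  by (auto simp: walk_end_def)

lemma walk_end_in_verts: "is_walk G v es \<Longrightarrow> walk_end G v es \<in> verts G"
  by (induction es arbitrary: v) (auto simp: walk_end_Cons walk_end_def)

lemma walk_tails_heads: "is_walk G v es \<Longrightarrow> map (tail G) es @ [walk_end G v es] = v # map (head G) es"
  by (induction es arbitrary: v) (auto simp: walk_end_Cons walk_end_def)

lemma assembly_graph_out_in_arcs:
  assumes "assembly_graph G" and "x \<in> verts G"
  shows "\<exists>e\<in>arcs G. tail G e = x" and "\<exists>e\<in>arcs G. head G e = x"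
proof -
  obtain v es where "is_dcycle G v es" and x: "x \<in> set (walk_verts G v es)"
    using assms unfolding assembly_graph_def by blast
  then have w: "is_walk G v es" "es \<noteq> []" "walk_end G v es = v" unfolding is_dcycle_def by auto
  have "x \<in> set (map (tail G) es @ [v])" and "x \<in> set (v # map (head G) es)"
    using x walk_tails_heads[OF w(1)] w(3) unfolding walk_verts_def by simp_all
  moreover have "tail G (hd es) = v" and "head G (last es) = v"
    using w by (cases es; simp add: walk_end_def)+
  then have "v \<in> tail G ` set es" and "v \<in> head G ` set es"
    using w(2) by (metis hd_in_set image_eqI, metis last_in_set image_eqI)
  ultimately have "x \<in> tail G ` set es" and "x \<in> head G ` set es" by auto
  then show "\<exists>e\<in>arcs G. tail G e = x" and "\<exists>e\<in>arcs G. head G e = x"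
    using is_walk_arcs[OF w(1)] by auto
qed

definition closed_walk :: "('v, 'e, 'a) agraph \<Rightarrow> 'e list \<Rightarrow> bool" where
  "closed_walk G c \<longleftrightarrow>
     c \<noteq> [] \<and> is_walk G (tail G (hd c)) c \<and> walk_end G (tail G (hd c)) c = tail G (hd c)"

lemma is_circuit_closed_walk: "is_circuit G c \<Longrightarrow> closed_walk G c"
  unfolding is_circuit_def closed_walk_def walk_end_def by auto

lemma is_circuit_arcs: "is_circuit G C \<Longrightarrow> set C \<subseteq> arcs G"
  unfolding is_circuit_def by (metis is_walk_arcs)

lemma closed_walk_repeat:
  assumes "closed_walk G c"
  shows "is_walk G (tail G (hd c)) (repeat n c)"
    and "walk_end G (tail G (hd c)) (repeat n c) = tail G (hd c)"
proof (induction n)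
  case 0
  show "is_walk G (tail G (hd c)) (repeat 0 c)"
    using assms is_walk_start unfolding closed_walk_def by auto
  show "walk_end G (tail G (hd c)) (repeat 0 c) = tail G (hd c)" by (simp add: walk_end_def)
next
  case (Suc n)
  then show "is_walk G (tail G (hd c)) (repeat (Suc n) c)"
      "walk_end G (tail G (hd c)) (repeat (Suc n) c) = tail G (hd c)"
    using assms unfolding closed_walk_def by (auto simp: is_walk_append walk_end_append)
qed

lemma dcycle_circuit:
  assumes "is_dcycle G v es"
  shows "is_circuit G es" and "distinct (map (tail G) es)" and "distinct (map (head G) es)"
proof -
  have w: "es \<noteq> []" "is_walk G v es" "walk_end G v es = v" and dt: "distinct (map (tail G) es)"
    using assms unfolding is_dcycle_def by auto
  have tv: "tail G (hd es) = v" using w by (cases es) auto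
  have "\<not> (\<exists>ys k. k \<ge> 2 \<and> es = repeat k ys)"
  proof
    assume "\<exists>ys k. k \<ge> 2 \<and> es = repeat k ys"
    then obtain ys k where "es = repeat (Suc (Suc k)) ys" by (metis add_2_eq_Suc le_Suc_ex)
    then have "es = ys @ ys @ repeat k ys" and "ys \<noteq> []" using w(1) by auto
    then show False using dt by (cases ys) auto
  qed
  then show "is_circuit G es" using w tv unfolding is_circuit_def walk_end_def by auto
  show "distinct (map (tail G) es)" by (rule dt)
  have "map (tail G) es @ [v] = v # map (head G) es" using walk_tails_heads[OF w(2)] w(3) by simp
  then have "map (head G) es = rotate1 (map (tail G) es)" using tv w(1) by (cases es) auto
  then show "distinct (map (head G) es)" using dt by simp
qed

lemma sub_ww_repeat_set: "sub_ww G x es u (repeat n c) \<Longrightarrow> set es \<subseteq> set c"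
  unfolding sub_ww_def by (metis Un_subset_iff set_append set_repeat_subset)

lemma subwalk_Circ_set: "subwalk G (Walk x es) (Circ c) \<Longrightarrow> set es \<subseteq> set c"
  using sub_ww_repeat_set by (metis subwalk.simps(2))

lemma subwalk_Circ_Circ_set: "subwalk G (Circ cs) (Circ c) \<Longrightarrow> set cs = set c"
  by auto

lemma subwalk_Circ_arc_ends:
  assumes C: "closed_walk G C" and e: "e \<in> set C"
  shows "subwalk G (Walk (tail G e) []) (Circ C)" and "subwalk G (Walk (head G e) []) (Circ C)"
proof -
  define u where "u = tail G (hd C)"
  obtain as rest where split: "C = as @ e # rest" using e by (metis split_list)
  have "is_walk G u (as @ e # rest)" using C split unfolding closed_walk_def u_def by simp
  then have ends: "tail G e = walk_end G u as" "head G e = walk_end G u (as @ [e])"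
    by (simp_all add: is_walk_append walk_end_append walk_end_def)
  have "repeat 1 C = as @ [] @ (e # rest)" "repeat 1 C = (as @ [e]) @ [] @ rest"
    using split by simp_all
  then show "subwalk G (Walk (tail G e) []) (Circ C)" "subwalk G (Walk (head G e) []) (Circ C)"
    unfolding subwalk.simps(2) sub_ww_def u_def[symmetric] using ends by blast+
qed

lemma subwalk_Circ_extend_right:
  assumes C: "closed_walk G C" "distinct (map (tail G) C)" "e \<in> set C"
    and s: "subwalk G (Walk x es) (Circ C)" and te: "tail G e = walk_end G x es"
  shows "subwalk G (Walk x (es @ [e])) (Circ C)"
proof -
  define u where "u = tail G (hd C)"
  obtain n as bs where r: "repeat n C = as @ es @ bs" and x: "x = walk_end G u as"
    using s unfolding u_def by (auto simp: sub_ww_def)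
  have r1: "repeat (Suc n) C = as @ es @ (bs @ C)" unfolding repeat_Suc_right r by simp
  obtain b rest where br: "bs @ C = b # rest"
    using C(1) unfolding closed_walk_def by (cases "bs @ C") auto
  have "is_walk G u (as @ es @ b # rest)"
    using closed_walk_repeat(1)[OF C(1), of "Suc n"] r1 br u_def by simp
  then have "tail G b = walk_end G x es"
    using x by (simp add: is_walk_append walk_end_append del: append_assoc)
  moreover have "set bs \<subseteq> set C" using r set_repeat_subset[of n C] by auto
  then have "b \<in> set C" using br by (cases bs) auto
  ultimately have "b = e" using C(2,3) te by (metis distinct_map inj_onD)
  then have "repeat (Suc n) C = as @ (es @ [e]) @ rest" using r1 br by simp
  then have "sub_ww G x (es @ [e]) u (repeat (Suc n) C)" using x unfolding sub_ww_def by blast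
  then show ?thesis unfolding subwalk.simps(2) u_def by blast
qed

lemma subwalk_Circ_extend_left:
  assumes C: "closed_walk G C" "distinct (map (head G) C)" "e \<in> set C"
    and s: "subwalk G (Walk x es) (Circ C)" and he: "head G e = x"
  shows "subwalk G (Walk (tail G e) (e # es)) (Circ C)"
proof -
  define u where "u = tail G (hd C)"
  obtain n as bs where r: "repeat n C = as @ es @ bs" and x: "x = walk_end G u as"
    using s unfolding u_def by (auto simp: sub_ww_def)
  have r1: "repeat (Suc n) C = (C @ as) @ es @ bs" using r by simp
  obtain B a where Ba: "C @ as = B @ [a]"
    using C(1) unfolding closed_walk_def by (cases "C @ as" rule: rev_cases) auto
  have w: "is_walk G u (C @ as)"
    using closed_walk_repeat(1)[OF C(1), of "Suc n"] r1 u_def by (simp add: is_walk_append)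
  have "walk_end G u (C @ as) = x"
    using C(1) x unfolding u_def closed_walk_def by (simp add: walk_end_append)
  then have a: "head G a = x" "tail G a = walk_end G u B"
    using w Ba by (auto simp: walk_end_append walk_end_def is_walk_append)
  have "set as \<subseteq> set C" using r set_repeat_subset[of n C] by auto
  then have "a \<in> set C" using Ba by (metis Un_iff in_set_conv_decomp set_append subsetD)
  then have "a = e" using C(2,3) he a(1) by (metis distinct_map inj_onD)
  then have "repeat (Suc n) C = B @ (e # es) @ bs" "tail G e = walk_end G u B"
    using r1 Ba a by simp_all
  then have "sub_ww G (tail G e) (e # es) u (repeat (Suc n) C)" unfolding sub_ww_def by blast
  then show ?thesis unfolding subwalk.simps(2) u_def by blast
qed

lemma no_common_circuit:
  assumes "e1 \<in> set C1" "e2 \<in> set C2" "distinct (map f C2)" "f e1 = f e2" "e1 \<noteq> e2"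
    and "subwalk G (Circ cs) (Circ C1)" and "subwalk G (Circ cs) (Circ C2)"
  shows False
proof -
  have "set C1 = set C2" using assms(6,7) subwalk_Circ_Circ_set by metis
  then show False using assms(1-5) by (metis distinct_map inj_onD)
qed

lemma genome_path_candidate_circuit: "genome_path_candidate G P \<Longrightarrow> c \<in> P \<Longrightarrow> is_circuit G c"
  unfolding genome_path_candidate_def by blast

lemma OA_Labels_gpc_iff:
  "s \<in> OA (Labels_gpc G ` PP) \<longleftrightarrow> (\<forall>P\<in>PP. \<exists>c\<in>P. lsubstr s (Cyc (circ_label G c))) \<and>
    (\<forall>t. (\<forall>P\<in>PP. \<exists>c\<in>P. lsubstr t (Cyc (circ_label G c))) \<and> lsubstr s t \<longrightarrow> lsubstr t s)"
  unfolding OA_def Labels_gpc_def by auto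

lemma OA_Fin_common_superstring:
  assumes "Fin s \<in> OA CC" and "\<forall>C\<in>CC. \<exists>c\<in>C. lsubstr (Fin t) (Cyc c)" and "sublist s t"
  shows "t = s"
proof -
  have "lsubstr (Fin t) (Fin s)"
    using assms unfolding OA_def mem_Collect_eq by (metis lsubstr.simps(1))
  then show ?thesis using assms(3) by (simp add: sublist_order.order.antisym)
qed

lemma OGA_Walk_no_longer_common_superwalk:
  assumes "Walk v es \<in> OGA G PP" and "is_walk G v' es'"
    and "\<forall>P\<in>PP. \<exists>c\<in>P. subwalk G (Walk v' es') (Circ c)" and "sub_ww G v es v' es'"
  shows "length es' \<le> length es"
proof -
  have "subwalk G (Walk v' es') (Walk v es)"
    using assms unfolding OGA_def mem_Collect_eq by (metis subwalk.simps(1) valid_wobj.simps(1))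
  then show ?thesis by (auto simp: sub_ww_def)
qed

definition common_walk :: "('v, 'e, 'a) agraph \<Rightarrow> 'e list \<Rightarrow> 'e list \<Rightarrow> 'v \<Rightarrow> 'e list \<Rightarrow> bool" where
  "common_walk G C1 C2 x es \<longleftrightarrow>
     is_walk G x es \<and> subwalk G (Walk x es) (Circ C1) \<and> subwalk G (Walk x es) (Circ C2)"

lemma common_walk_shorter:
  assumes "common_walk G C1 C2 x es" and "C1 \<noteq> []" and "distinct (map f C2)"
    and "e1 \<in> set C1" "e2 \<in> set C2" "f e1 = f e2" "e1 \<noteq> e2"
  shows "length es < length C1"
proof (rule ccontr)
  assume "\<not> length es < length C1"
  then have "length C1 \<le> length es" by simp
  moreover obtain n as bs where "repeat n C1 = as @ es @ bs"
    using assms(1) unfolding common_walk_def by (auto simp: sub_ww_def)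
  ultimately have "set C1 \<subseteq> set es" using set_subset_of_long_infix_repeat by blast
  moreover have "set es \<subseteq> set C2" using assms(1) subwalk_Circ_set unfolding common_walk_def by meson
  ultimately have "e1 \<in> set C2" using assms(4) by blast
  have "inj_on f (set C2)" using assms(3) by (simp add: distinct_map)
  then show False using \<open>e1 \<in> set C2\<close> assms(5-7) by (auto dest: inj_onD)
qed

lemma ex_longest_common_walk:
  assumes "common_walk G C1 C2 x0 es0" and "Q x0 es0"
    and "\<And>x es. common_walk G C1 C2 x es \<Longrightarrow> length es < N"
  obtains x es where "common_walk G C1 C2 x es" and "Q x es"
    and "\<And>x' es'. common_walk G C1 C2 x' es' \<Longrightarrow> Q x' es' \<Longrightarrow> length es' \<le> length es"
proof -
  define R where "R = (\<lambda>(x, es). common_walk G C1 C2 x es \<and> Q x es)"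
  obtain W where "R W" and "\<forall>y. R y \<longrightarrow> length (snd y) \<le> length (snd W)"
    using ex_has_greatest_nat[of R "(x0, es0)" "\<lambda>y. length (snd y)" N] assms unfolding R_def
      by fastforce
  then show thesis using that unfolding R_def by (cases W) fastforce
qed

lemma common_walk_in_OGA:
  assumes "common_walk G C1 C2 x es"
    and no_circ: "\<And>cs. subwalk G (Circ cs) (Circ C1) \<Longrightarrow> subwalk G (Circ cs) (Circ C2) \<Longrightarrow> False"
    and max: "\<And>x' es'. common_walk G C1 C2 x' es' \<Longrightarrow> sub_ww G x es x' es' \<Longrightarrow> x' = x \<and> es' = es"
  shows "Walk x es \<in> OGA G {{C1}, {C2}}"
  unfolding OGA_def mem_Collect_eq
proof (intro conjI allI impI)
  show "valid_wobj G (Walk x es)" and "\<forall>P\<in>{{C1}, {C2}}. \<exists>c\<in>P. subwalk G (Walk x es) (Circ c)"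
    using assms(1) unfolding common_walk_def by auto
next
  fix w assume w: "valid_wobj G w \<and> (\<forall>P\<in>{{C1}, {C2}}. \<exists>c\<in>P. subwalk G w (Circ c)) \<and>
    subwalk G (Walk x es) w"
  show "subwalk G w (Walk x es)"
  proof (cases w)
    case (Walk x' es')
    then have "common_walk G C1 C2 x' es'" and "sub_ww G x es x' es'"
      using w unfolding common_walk_def by auto
    then have "x' = x \<and> es' = es" by (rule max)
    then show ?thesis using Walk by (auto simp: sub_ww_def walk_end_def)
  qed (use w no_circ in auto)
qed

section \<open>The strings spelled by walks\<close>

text \<open>\<open>lstr\<close> maps cyclic labels to the empty string; this is harmless because all labels of an
  assembly graph turn out to be finite strings.\<close>

definition vstr :: "('v, 'e, 'a) agraph \<Rightarrow> 'v \<Rightarrow> 'a list" where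
  "vstr G v = lstr (vlab G v)"

definition estr :: "('v, 'e, 'a) agraph \<Rightarrow> 'e \<Rightarrow> 'a list" where
  "estr G e = lstr (elab G e)"

definition estr_after :: "('v, 'e, 'a) agraph \<Rightarrow> 'e \<Rightarrow> 'a list" where
  "estr_after G e = drop (length (vstr G (tail G e))) (estr G e)"

definition estr_before :: "('v, 'e, 'a) agraph \<Rightarrow> 'e \<Rightarrow> 'a list" where
  "estr_before G e = take (length (estr G e) - length (vstr G (head G e))) (estr G e)"

definition walk_str :: "('v, 'e, 'a) agraph \<Rightarrow> 'v \<Rightarrow> 'e list \<Rightarrow> 'a list" where
  "walk_str G v es = vstr G v @ concat (map (estr_after G) es)"

definition circ_word :: "('v, 'e, 'a) agraph \<Rightarrow> 'e list \<Rightarrow> 'a list" where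
  "circ_word G c = concat (map (estr_after G) c)"

lemma walk_str_append: "walk_str G v (xs @ ys) = walk_str G v xs @ concat (map (estr_after G) ys)"
  by (simp add: walk_str_def)

lemma walk_str_repeat: "walk_str G v (repeat n c) = vstr G v @ repeat n (circ_word G c)"
  by (simp add: walk_str_def circ_word_def map_concat_repeat)

locale assembly =
  fixes G :: "('v, 'e, 'a) agraph"
  assumes assembly_graph: "assembly_graph G"
begin

lemma arc_ends [simp]: "e \<in> arcs G \<Longrightarrow> tail G e \<in> verts G" "e \<in> arcs G \<Longrightarrow> head G e \<in> verts G"
  using assembly_graph unfolding assembly_graph_def abstract_assembly_graph_def by auto

lemma arc_label_prefix_suffix:
  "e \<in> arcs G \<Longrightarrow> lprefix (vlab G (tail G e)) (elab G e) \<and> lsuffix (vlab G (head G e)) (elab G e)"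
  using assembly_graph unfolding assembly_graph_def abstract_assembly_graph_def by auto

lemma arc_not_prefix_and_suffix: "e \<in> arcs G \<Longrightarrow> \<not> (prefix_edge G e \<and> suffix_edge G e)"
  using assembly_graph unfolding assembly_graph_def by simp

text \<open>A cyclic edge label would force both end labels to equal it, making the edge both a
  prefix and a suffix edge.\<close>

lemma elab_Fin: "e \<in> arcs G \<Longrightarrow> elab G e = Fin (estr G e)"
proof (cases "elab G e")
  case (Cyc c)
  assume e: "e \<in> arcs G"
  have "lprefix a (Cyc c) \<longleftrightarrow> a = Cyc c" "lsuffix a (Cyc c) \<longleftrightarrow> a = Cyc c" for a
    by (cases a; auto)+
  then have "prefix_edge G e \<and> suffix_edge G e"
    using arc_label_prefix_suffix[OF e] Cyc unfolding prefix_edge_def suffix_edge_def by simp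
  then show ?thesis using arc_not_prefix_and_suffix e by blast
qed (simp add: estr_def)

lemma vlab_Fin: "v \<in> verts G \<Longrightarrow> vlab G v = Fin (vstr G v)"
proof -
  assume "v \<in> verts G"
  then obtain e where e: "e \<in> arcs G" "tail G e = v"
    using assembly_graph_out_in_arcs(1)[OF assembly_graph] by blast
  then have "lprefix (vlab G v) (Fin (estr G e))"
    using arc_label_prefix_suffix[of e] elab_Fin[of e] by simp
  then show ?thesis by (cases "vlab G v") (auto simp: vstr_def)
qed

lemma estr_tail_after: "e \<in> arcs G \<Longrightarrow> estr G e = vstr G (tail G e) @ estr_after G e"
  using arc_label_prefix_suffix[of e] elab_Fin[of e] vlab_Fin[of "tail G e"]
  by (auto simp: estr_after_def prefix_def)

lemma estr_before_head: "e \<in> arcs G \<Longrightarrow> estr G e = estr_before G e @ vstr G (head G e)"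
  using arc_label_prefix_suffix[of e] elab_Fin[of e] vlab_Fin[of "head G e"]
  by (auto simp: estr_before_def suffix_def)

lemma estr_after_or_before_nonempty: "e \<in> arcs G \<Longrightarrow> estr_after G e \<noteq> [] \<or> estr_before G e \<noteq> []"
  using arc_not_prefix_and_suffix[of e] estr_tail_after[of e] estr_before_head[of e] elab_Fin[of e]
    vlab_Fin[of "tail G e"] vlab_Fin[of "head G e"]
  unfolding prefix_edge_def suffix_edge_def by auto

lemma wlab_aux_eq:
  "is_walk G u es \<Longrightarrow> wlab_aux G (Fin acc) u es = Fin (acc @ concat (map (estr_after G) es))"
proof (induction es arbitrary: u acc)
  case (Cons f es)
  then have "drop (llen (vlab G u)) (lstr (elab G f)) = estr_after G f"
    using vlab_Fin[of u] by (auto simp: estr_after_def estr_def)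
  then show ?case using Cons by simp
qed simp

lemma walk_label_eq:
  assumes w: "is_walk G v es"
  shows "walk_label G v es = Fin (walk_str G v es)"
proof (cases es)
  case Nil
  then show ?thesis using vlab_Fin is_walk_start[OF w] by (simp add: walk_label_def walk_str_def)
next
  case (Cons e es')
  then have e: "e \<in> arcs G" "tail G e = v" "is_walk G (head G e) es'" using w by auto
  have "walk_label G v es = wlab_aux G (Fin (estr G e)) (head G e) es'"
    using Cons elab_Fin[OF e(1)] by (simp add: walk_label_def)
  also have "\<dots> = Fin (estr G e @ concat (map (estr_after G) es'))" using wlab_aux_eq[OF e(3)] .
  finally show ?thesis using Cons estr_tail_after[OF e(1)] e(2) by (simp add: walk_str_def)
qed

lemma walk_str_before:
  "is_walk G v es \<Longrightarrow> walk_str G v es = concat (map (estr_before G) es) @ vstr G (walk_end G v es)"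
proof (induction es arbitrary: v)
  case (Cons e es)
  then have "walk_str G v (e # es) = estr G e @ concat (map (estr_after G) es)"
    using estr_tail_after by (auto simp: walk_str_def)
  also have "\<dots> = estr_before G e @ walk_str G (head G e) es"
    using estr_before_head Cons.prems by (simp add: walk_str_def)
  finally show ?case using Cons by (simp add: walk_end_Cons)
qed (simp add: walk_str_def walk_end_def)

lemma walk_str_split:
  "is_walk G v (xs @ ys) \<Longrightarrow>
    walk_str G v (xs @ ys) = concat (map (estr_before G) xs) @ walk_str G (walk_end G v xs) ys"
  using walk_str_before[of v xs] by (simp add: is_walk_append walk_str_append walk_str_def)

lemma closed_walk_length_before:
  assumes "closed_walk G c"
  shows "length (concat (map (estr_before G) c)) = length (circ_word G c)"
proof -
  have "vstr G (tail G (hd c)) @ circ_word G c =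
      concat (map (estr_before G) c) @ vstr G (tail G (hd c))"
    using walk_str_before[of "tail G (hd c)" c] assms
    by (simp add: closed_walk_def walk_str_def circ_word_def)
  from arg_cong[OF this, of length] show ?thesis by simp
qed

lemma circ_word_nonempty: "closed_walk G c \<Longrightarrow> circ_word G c \<noteq> []"
proof
  assume c: "closed_walk G c" and "circ_word G c = []"
  then have "concat (map (estr_before G) c) = []" using closed_walk_length_before by fastforce
  moreover have "hd c \<in> set c" "hd c \<in> arcs G" using c by (auto simp: closed_walk_def neq_Nil_conv)
  ultimately show False
    using \<open>circ_word G c = []\<close> estr_after_or_before_nonempty by (auto simp: circ_word_def)
qed

lemma circ_label_eq: "closed_walk G c \<Longrightarrow> circ_label G c = cyc (circ_word G c)"
proof -
  assume "closed_walk G c"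
  then have w: "is_walk G (tail G (hd c)) c" by (simp add: closed_walk_def)
  have "vlab G (tail G (hd c)) = Fin (vstr G (tail G (hd c)))"
    by (rule vlab_Fin[OF is_walk_start[OF w]])
  moreover have "walk_label G (tail G (hd c)) c = Fin (vstr G (tail G (hd c)) @ circ_word G c)"
    using walk_label_eq[OF w] by (simp add: walk_str_def circ_word_def)
  ultimately show ?thesis by (simp add: circ_label_def)
qed

lemma subwalk_repeat_cyc_occ:
  assumes c: "closed_walk G c" and split: "repeat n c = as @ es @ bs"
    and v: "v = walk_end G (tail G (hd c)) as"
  shows "\<exists>k. cyc_occ (walk_str G v es) (circ_word G c) k"
proof -
  define u where "u = tail G (hd c)"
  define l where "l = length (vstr G u)"
  define R where "R = repeat (l + 1) c"
  have full: "repeat (l + 1 + n) c = R @ as @ es @ bs"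
    unfolding R_def using split by (simp add: replicate_add)
  have walk: "is_walk G u (R @ as @ es @ bs)"
    using closed_walk_repeat(1)[OF c, of "l + 1 + n"] unfolding full u_def .
  have "walk_end G u (R @ as) = v"
    unfolding walk_end_append R_def u_def closed_walk_repeat(2)[OF c] using v by simp
  have "vstr G u @ repeat (l + 1 + n) (circ_word G c) = walk_str G u (R @ as @ es @ bs)"
    unfolding full[symmetric] by (rule walk_str_repeat[symmetric])
  also have "\<dots> = concat (map (estr_before G) (R @ as)) @ walk_str G v (es @ bs)"
    using walk_str_split[of u "R @ as" "es @ bs"] walk \<open>walk_end G u (R @ as) = v\<close> by simp
  also have "\<dots> =
      concat (map (estr_before G) (R @ as)) @ walk_str G v es @ concat (map (estr_after G) bs)"
    by (simp add: walk_str_append)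
  finally have eq: "vstr G u @ repeat (l + 1 + n) (circ_word G c)
      = concat (map (estr_before G) (R @ as)) @ walk_str G v es @ concat (map (estr_after G) bs)" .
  have "length (concat (map (estr_before G) R)) = (l + 1) * length (circ_word G c)"
    unfolding R_def map_concat_repeat length_repeat closed_walk_length_before[OF c] ..
  moreover have "l + 1 \<le> (l + 1) * length (circ_word G c)"
    using circ_word_nonempty[OF c] mult_le_mono2[of 1 "length (circ_word G c)" "l + 1"]
    by (simp add: Suc_le_eq)
  ultimately have "l \<le> length (concat (map (estr_before G) (R @ as)))" by simp
  with eq show ?thesis unfolding l_def by (blast intro: cyc_occ_of_infix_repeat)
qed

lemma lsubstr_circ_label_iff:
  "closed_walk G c \<Longrightarrow> lsubstr (Fin t) (Cyc (circ_label G c)) \<longleftrightarrow> (\<exists>k. cyc_occ t (circ_word G c) k)"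
  using circ_label_eq lsubstr_Fin_cyc_iff[OF circ_word_nonempty] by metis

lemma subwalk_circ_lsubstr:
  assumes "closed_walk G c" and "subwalk G (Walk v es) (Circ c)"
  shows "lsubstr (Fin (walk_str G v es)) (Cyc (circ_label G c))"
  using assms subwalk_repeat_cyc_occ lsubstr_circ_label_iff by (auto simp: sub_ww_def)

lemma lsubstr_circ_label_infix_repeat:
  assumes c: "closed_walk G c" and "lsubstr (Fin t) (Cyc (circ_label G c))"
  obtains n \<alpha> \<beta> where "walk_str G (tail G (hd c)) (repeat n c) = \<alpha> @ t @ \<beta>" and "\<alpha> \<noteq> []"
    and "\<beta> \<noteq> []"
  using assms infix_repeat_of_cyc_occ[OF circ_word_nonempty[OF c]]
  by (metis lsubstr_circ_label_iff walk_str_repeat)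

lemma arc_on_circuit:
  assumes "e \<in> arcs G"
  obtains C where "is_circuit G C" and "e \<in> set C"
    and "distinct (map (tail G) C)" and "distinct (map (head G) C)"
  using assms assembly_graph dcycle_circuit unfolding assembly_graph_def by metis

section \<open>Non-redundancy and splitting\<close>

lemma non_redundantE:
  assumes "non_redundant G" and "is_walk G v es" and "is_walk G v' es'"
    and "walk_str G v' es' = \<alpha> @ walk_str G v es @ \<beta>" and "\<alpha> \<noteq> []" and "\<beta> \<noteq> []"
  obtains as bs where "as \<noteq> []" and "bs \<noteq> []" and "es' = as @ es @ bs" and "v = walk_end G v' as"
proof -
  have "lproper_infix (walk_label G v es) (walk_label G v' es')"
    using assms walk_label_eq by auto
  then show thesis using assms(1-3) that unfolding non_redundant_def inner_subwalk_def by blast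
qed

lemma non_redundant_split_if_long_ends:
  assumes nr: "non_redundant G" and w: "is_walk G u qs" "is_walk G v es"
    and eq: "walk_str G u qs = \<alpha> @ walk_str G v es @ \<beta>" and "\<alpha> \<noteq> []" "\<beta> \<noteq> []"
    and first: "\<And>f qs'. qs = f # qs' \<Longrightarrow> length \<alpha> \<le> length (estr_before G f)"
    and last: "\<And>f qs'. qs = qs' @ [f] \<Longrightarrow> length \<beta> \<le> length (estr_after G f)"
  shows "\<exists>as bs. qs = as @ es @ bs \<and> v = walk_end G u as \<and>
    concat (map (estr_before G) as) = \<alpha> \<and> concat (map (estr_after G) bs) = \<beta>"
proof -
  obtain as bs where split: "as \<noteq> []" "bs \<noteq> []" "qs = as @ es @ bs" "v = walk_end G u as"
    using non_redundantE[OF nr w(2,1) eq assms(5,6)] by blast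
  have "walk_str G u qs =
      concat (map (estr_before G) as) @ walk_str G v es @ concat (map (estr_after G) bs)"
    using walk_str_split[of u as "es @ bs"] w(1) split by (simp add: walk_str_append)
  then have eq': "concat (map (estr_before G) as) @ walk_str G v es @ concat (map (estr_after G) bs)
      = \<alpha> @ walk_str G v es @ \<beta>" using eq by simp
  have "length \<alpha> \<le> length (concat (map (estr_before G) as))"
    using first split(1,3) by (cases as) auto
  moreover have "length \<beta> \<le> length (concat (map (estr_after G) bs))"
    using last split(2,3) by (cases bs rule: rev_cases) auto
  ultimately have "length (concat (map (estr_before G) as)) = length \<alpha>"
    using arg_cong[OF eq', of length] by simp
  then show ?thesis using eq' split(3,4) by auto
qed

text \<open>Non-redundancy only provides some occurrence of the walk inside the longer one. Cutting
  off first and last arcs whose contribution fits inside \<open>\<alpha>\<close> resp. \<open>\<beta>\<close> reduces to the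
  case where any occurrence is forced to sit at the given position.\<close>

lemma non_redundant_aligned_split:
  assumes nr: "non_redundant G"
  shows "is_walk G u qs \<Longrightarrow> is_walk G v es \<Longrightarrow> walk_str G u qs = \<alpha> @ walk_str G v es @ \<beta> \<Longrightarrow>
    \<alpha> \<noteq> [] \<Longrightarrow> \<beta> \<noteq> [] \<Longrightarrow> \<exists>as bs. qs = as @ es @ bs \<and> v = walk_end G u as \<and>
      concat (map (estr_before G) as) = \<alpha> \<and> concat (map (estr_after G) bs) = \<beta>"
proof (induction qs arbitrary: u \<alpha> \<beta> rule: length_induct)
  case (1 qs)
  note wq = "1.prems"(1) and wv = "1.prems"(2) and eq = "1.prems"(3)
  consider (first) f qs' where "qs = f # qs'" and "length (estr_before G f) < length \<alpha>"
    | (last) f qs' where "qs = qs' @ [f]" and "length (estr_after G f) < length \<beta>"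
    | (aligned) "\<forall>f qs'. qs = f # qs' \<longrightarrow> length \<alpha> \<le> length (estr_before G f)"
        and "\<forall>f qs'. qs = qs' @ [f] \<longrightarrow> length \<beta> \<le> length (estr_after G f)"
    by (metis not_le)
  then show ?case
  proof cases
    case first
    have "estr_before G f @ walk_str G (head G f) qs' = \<alpha> @ walk_str G v es @ \<beta>"
      using walk_str_split[of u "[f]" qs'] wq first(1) eq by (simp add: walk_end_def)
    moreover define \<alpha>' where "\<alpha>' = drop (length (estr_before G f)) \<alpha>"
    ultimately have "estr_before G f = take (length (estr_before G f)) \<alpha>"
      and "walk_str G (head G f) qs' = \<alpha>' @ walk_str G v es @ \<beta>"
      using first(2) by (auto simp: append_eq_append_conv_if)
    moreover have \<alpha>: "\<alpha> = estr_before G f @ \<alpha>'"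
      using calculation(1) unfolding \<alpha>'_def by (metis append_take_drop_id)
    moreover have "\<alpha>' \<noteq> []" using first(2) unfolding \<alpha>'_def by simp
    ultimately obtain as bs where "qs' = as @ es @ bs" "v = walk_end G (head G f) as"
        "concat (map (estr_before G) as) = \<alpha>'" "concat (map (estr_after G) bs) = \<beta>"
      using "1.IH"[rule_format, of qs' "head G f" \<alpha>' \<beta>] first(1) wq wv "1.prems"(5) by auto
    then show ?thesis
      using first(1) wq \<alpha> by (intro exI[of _ "f # as"] exI[of _ bs]) (auto simp: walk_end_Cons)
  next
    case last
    have e: "walk_str G u qs' @ estr_after G f = \<alpha> @ walk_str G v es @ \<beta>"
      using last(1) eq by (simp add: walk_str_append)
    define \<beta>' where "\<beta>' = take (length \<beta> - length (estr_after G f)) \<beta>"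
    have "suffix (estr_after G f) \<beta>"
      using e last(2)
        by (metis suffixI suffix_append suffix_length_le le_less_trans not_less suffix_same_cases)
    then have \<beta>: "\<beta> = \<beta>' @ estr_after G f" unfolding \<beta>'_def suffix_def by auto
    then have "walk_str G u qs' = \<alpha> @ walk_str G v es @ \<beta>'" and "\<beta>' \<noteq> []" using e last(2) by auto
    then obtain as bs where "qs' = as @ es @ bs" "v = walk_end G u as"
        "concat (map (estr_before G) as) = \<alpha>" "concat (map (estr_after G) bs) = \<beta>'"
      using "1.IH"[rule_format, of qs' u \<alpha> \<beta>'] last(1) wq wv "1.prems"(4)
        by (auto simp: is_walk_append)
    then show ?thesis using last(1) \<beta> by (intro exI[of _ as] exI[of _ "bs @ [f]"]) auto
  next
    case aligned
    then show ?thesis using non_redundant_split_if_long_ends[OF nr wq wv eq "1.prems"(4,5)] by blast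
  qed
qed

lemma splitting_out_lcp:
  assumes "splitting G" "e1 \<in> arcs G" "e2 \<in> arcs G" "e1 \<noteq> e2" "tail G e1 = tail G e2"
  shows "longest_common_prefix (estr G e1) (estr G e2) = vstr G (tail G e1)"
  using assms elab_Fin[of e1] elab_Fin[of e2] vlab_Fin[of "tail G e1"] unfolding splitting_def
    by force

lemma splitting_in_lcs:
  assumes "splitting G" "e1 \<in> arcs G" "e2 \<in> arcs G" "e1 \<noteq> e2" "head G e1 = head G e2"
  shows "rev (longest_common_prefix (rev (estr G e1)) (rev (estr G e2))) = vstr G (head G e1)"
  using assms elab_Fin[of e1] elab_Fin[of e2] vlab_Fin[of "head G e1"] unfolding splitting_def
    by force

lemma suffix_arcs_shorten_label:
  "is_walk G u xs \<Longrightarrow> \<forall>e\<in>set xs. estr_after G e = [] \<Longrightarrow>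
    suffix (vstr G (walk_end G u xs)) (vstr G u) \<and>
    (xs \<noteq> [] \<longrightarrow> length (vstr G (walk_end G u xs)) < length (vstr G u))"
proof (induction xs arbitrary: u)
  case (Cons e xs)
  then have e: "e \<in> arcs G" "tail G e = u" "is_walk G (head G e) xs" and "estr_after G e = []"
    by auto
  then have "vstr G u = estr_before G e @ vstr G (head G e)" and "estr_before G e \<noteq> []"
    using estr_tail_after estr_before_head estr_after_or_before_nonempty by (metis append_Nil2)+
  then show ?case using Cons.IH[OF e(3)] Cons.prems
    by (auto simp: walk_end_Cons suffix_def suffix_length_le intro: le_less_trans)
qed (simp add: walk_end_def)

lemma prefix_arcs_lengthen_label:
  "is_walk G u xs \<Longrightarrow> \<forall>e\<in>set xs. estr_before G e = [] \<Longrightarrow>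
    prefix (vstr G u) (vstr G (walk_end G u xs)) \<and>
    (xs \<noteq> [] \<longrightarrow> length (vstr G u) < length (vstr G (walk_end G u xs)))"
proof (induction xs arbitrary: u)
  case (Cons e xs)
  then have e: "e \<in> arcs G" "tail G e = u" "is_walk G (head G e) xs" and "estr_before G e = []"
    by auto
  then have "vstr G (head G e) = vstr G u @ estr_after G e" and "estr_after G e \<noteq> []"
    using estr_tail_after estr_before_head estr_after_or_before_nonempty by (metis append_Nil)+
  then show ?case using Cons.IH[OF e(3)] Cons.prems
    by (auto simp: walk_end_Cons prefix_def prefix_length_le intro: less_le_trans)
qed (simp add: walk_end_def)

lemma splitting_suffix_arcs_nested_tails:
  assumes sp: "splitting G" and b: "b \<in> arcs G" "estr_after G b = []"
    and h: "h \<in> arcs G" "estr_after G h = []" and "b \<noteq> h" and "head G b = head G h"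
    and "suffix (vstr G (tail G h)) (vstr G (tail G b))"
  shows False
proof -
  have eb: "estr G b = vstr G (tail G b)" and eh: "estr G h = vstr G (tail G h)"
    using estr_tail_after b h by simp_all
  have "vstr G (tail G h) = vstr G (head G h)"
    using splitting_in_lcs[OF sp b(1) h(1) assms(6,7)] assms(7,8) unfolding eb eh
    by (simp add: suffix_to_prefix longest_common_prefix_of_prefix)
  moreover have "estr_before G h \<noteq> []" using estr_after_or_before_nonempty h by blast
  ultimately show False using estr_before_head[OF h(1)] eh by simp
qed

lemma splitting_prefix_arcs_nested_heads:
  assumes sp: "splitting G" and b: "b \<in> arcs G" "estr_before G b = []"
    and h: "h \<in> arcs G" "estr_before G h = []" and "b \<noteq> h" and "tail G b = tail G h"
    and "prefix (vstr G (head G h)) (vstr G (head G b))"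
  shows False
proof -
  have eb: "estr G b = vstr G (head G b)" and eh: "estr G h = vstr G (head G h)"
    using estr_before_head b h by simp_all
  have "vstr G (head G h) = vstr G (tail G h)"
    using splitting_out_lcp[OF sp b(1) h(1) assms(6,7)] assms(7,8) unfolding eb eh
    by (simp add: longest_common_prefix_of_prefix)
  moreover have "estr_after G h \<noteq> []" using estr_after_or_before_nonempty h by blast
  ultimately show False using estr_tail_after[OF h(1)] eh by simp
qed

text \<open>A suffix arc \<open>b\<close> out of \<open>u\<close> carries the label of \<open>u\<close> onto a proper suffix of it. A walk
  leaving \<open>u\<close> through another arc and spelling more than the label of \<open>u\<close> would contain that
  suffix as a proper infix; non-redundancy places the head of \<open>b\<close> inside the walk, and the
  arc of the walk entering it violates the splitting condition together with \<open>b\<close>.\<close>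

lemma suffix_arc_blocks_other_walks:
  assumes sp: "splitting G" and nr: "non_redundant G"
    and b: "b \<in> arcs G" "tail G b = u" "estr_after G b = []"
    and w: "is_walk G u xs" and hd: "hd xs \<noteq> b"
  shows "concat (map (estr_after G) xs) = []"
proof (rule ccontr)
  assume "concat (map (estr_after G) xs) \<noteq> []"
  then obtain rs f rest where xs: "xs = rs @ f # rest" and f: "estr_after G f \<noteq> []"
    and rs: "\<forall>e\<in>set rs. estr_after G e = []"
    by (rule concat_map_neq_Nil_first)
  have wf: "is_walk G u (rs @ [f])" using w xs by (simp add: is_walk_append)
  have "walk_str G u (rs @ [f]) = estr_before G b @ walk_str G (head G b) [] @ estr_after G f"
    using rs estr_tail_after[OF b(1)] estr_before_head[OF b(1)] b(2,3) by (simp add: walk_str_def)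
  moreover have "estr_before G b \<noteq> []" using b estr_after_or_before_nonempty by blast
  ultimately obtain as bs where split: "as \<noteq> []" "bs \<noteq> []" "rs @ [f] = as @ bs"
      "head G b = walk_end G u as"
    using non_redundantE[OF nr _ wf] b(1) f
      by (metis append.left_neutral arc_ends(2) is_walk.simps(1))
  then obtain as0 h where as: "as = as0 @ [h]" by (cases as rule: rev_cases) auto
  have "rs = as @ butlast bs" using split(2,3) by (metis butlast_append butlast_snoc)
  then have "set as \<subseteq> set rs" by auto
  have wa: "is_walk G u as0" "is_walk G (walk_end G u as0) [h]"
    using wf split(3) as by (auto simp: is_walk_append)
  then have h: "h \<in> arcs G" "tail G h = walk_end G u as0" "head G h = head G b"
      "estr_after G h = []"
    using split(4) as rs \<open>set as \<subseteq> set rs\<close> by (auto simp: walk_end_append walk_end_def)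
  have y: "suffix (vstr G (tail G h)) (vstr G u)"
      "as0 \<noteq> [] \<Longrightarrow> length (vstr G (tail G h)) < length (vstr G u)"
    using suffix_arcs_shorten_label[OF wa(1)] rs \<open>set as \<subseteq> set rs\<close> as h(2) by auto
  have "h \<noteq> b"
  proof
    assume "h = b"
    then have "as0 \<noteq> []" using hd xs split(3) as by (cases as0; cases rs) auto
    then show False using y(2) b(2) \<open>h = b\<close> by simp
  qed
  then show False
    using splitting_suffix_arcs_nested_tails[OF sp b(1,3) h(1,4)] h(3) y(1) b(2) by metis
qed

lemma prefix_arc_blocks_other_walks:
  assumes sp: "splitting G" and nr: "non_redundant G"
    and b: "b \<in> arcs G" "head G b = v" "estr_before G b = []"
    and w: "is_walk G u xs" and v: "walk_end G u xs = v" and last: "last xs \<noteq> b"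
  shows "concat (map (estr_before G) xs) = []"
proof (rule ccontr)
  assume "concat (map (estr_before G) xs) \<noteq> []"
  then obtain rest f rs where xs: "xs = rest @ f # rs" and f: "estr_before G f \<noteq> []"
    and rs: "\<forall>e\<in>set rs. estr_before G e = []"
    by (rule concat_map_neq_Nil_last)
  have wf: "is_walk G (tail G f) (f # rs)" and vf: "walk_end G (tail G f) (f # rs) = v"
    using w v xs by (auto simp: is_walk_append walk_end_append)
  have "walk_str G (tail G f) (f # rs) =
      estr_before G f @ walk_str G (tail G b) [] @ estr_after G b"
    using walk_str_before[OF wf] vf rs estr_tail_after[OF b(1)] estr_before_head[OF b(1)] b(2,3)
    by (simp add: walk_str_def)
  moreover have "estr_after G b \<noteq> []" using b estr_after_or_before_nonempty by blast
  ultimately obtain as bs where split: "as \<noteq> []" "bs \<noteq> []" "f # rs = as @ bs"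
      "tail G b = walk_end G (tail G f) as"
    using non_redundantE[OF nr _ wf] b(1) f
      by (metis append.left_neutral arc_ends(1) is_walk.simps(1))
  then obtain h bs0 where bs: "bs = h # bs0" by (cases bs) auto
  have "rs = tl as @ bs" using split(1,3) by (cases as) auto
  then have "set bs \<subseteq> set rs" by auto
  have "is_walk G (tail G b) bs" using wf split(3,4) by (metis is_walk_append)
  then have h: "h \<in> arcs G" "tail G h = tail G b" "estr_before G h = []"
    and wb0: "is_walk G (head G h) bs0"
    using bs rs \<open>set bs \<subseteq> set rs\<close> by auto
  have "walk_end G (head G h) bs0 = v"
    using vf split(3,4) bs by (metis walk_end_append walk_end_Cons)
  then have y: "prefix (vstr G (head G h)) (vstr G v)"
      "bs0 \<noteq> [] \<Longrightarrow> length (vstr G (head G h)) < length (vstr G v)"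
    using prefix_arcs_lengthen_label[OF wb0] rs \<open>set bs \<subseteq> set rs\<close> bs by auto
  have "h \<noteq> b"
  proof
    assume "h = b"
    then have "bs0 \<noteq> []" using last xs split(3) bs by (cases bs0 rule: rev_cases) auto
    then show False using y(2) b(2) \<open>h = b\<close> by simp
  qed
  then show False
    using splitting_prefix_arcs_nested_heads[OF sp b(1,3) h(1,3)] h(2) y(1) b(2) by metis
qed

lemma splitting_first_arc_unique:
  assumes sp: "splitting G" and nr: "non_redundant G"
    and w: "is_walk G u bs" "is_walk G u bs'"
    and q: "concat (map (estr_after G) bs) = ch # \<beta>" "concat (map (estr_after G) bs') = ch # \<beta>'"
  shows "hd bs = hd bs'"
proof (rule ccontr)
  assume ne: "hd bs \<noteq> hd bs'"
  have "bs \<noteq> []" "bs' \<noteq> []" using q by (metis concat.simps(1) list.simps(8) list.distinct(1))+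
  then obtain b r b' r' where bs: "bs = b # r" "bs' = b' # r'" by (meson neq_Nil_conv)
  have b: "b \<in> arcs G" "tail G b = u" "b' \<in> arcs G" "tail G b' = u" using w bs by auto
  have "estr_after G b \<noteq> []"
  proof
    assume "estr_after G b = []"
    moreover have "hd bs' \<noteq> b" using ne bs by simp
    ultimately show False using suffix_arc_blocks_other_walks[OF sp nr b(1,2) _ w(2)] q(2)
      by (metis list.distinct(1))
  qed
  then obtain x where x: "estr_after G b = ch # x"
    using q(1) bs by (cases "estr_after G b") simp_all
  have "estr_after G b' \<noteq> []"
  proof
    assume "estr_after G b' = []"
    moreover have "hd bs \<noteq> b'" using ne bs by simp
    ultimately show False using suffix_arc_blocks_other_walks[OF sp nr b(3,4) _ w(1)] q(1)
      by (metis list.distinct(1))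
  qed
  then obtain x' where x': "estr_after G b' = ch # x'"
    using q(2) bs by (cases "estr_after G b'") simp_all
  have "longest_common_prefix (estr G b) (estr G b') \<noteq> vstr G u"
    using estr_tail_after[OF b(1)] estr_tail_after[OF b(3)] b x x'
      by (simp add: longest_common_prefix_append)
  then show False using splitting_out_lcp[OF sp b(1,3)] ne bs b by auto
qed

lemma splitting_last_arc_unique:
  assumes sp: "splitting G" and nr: "non_redundant G"
    and w: "is_walk G u as" "is_walk G u' as'" and v: "walk_end G u as = v" "walk_end G u' as' = v"
    and p: "concat (map (estr_before G) as) = \<alpha> @ [ch]"
      "concat (map (estr_before G) as') = \<alpha>' @ [ch]"
  shows "last as = last as'"
proof (rule ccontr)
  assume ne: "last as \<noteq> last as'"
  have "as \<noteq> []" "as' \<noteq> []" using p by (metis concat.simps(1) list.simps(8) snoc_eq_iff_butlast)+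
  then obtain r b r' b' where as: "as = r @ [b]" "as' = r' @ [b']" by (metis append_butlast_last_id)
  have b: "b \<in> arcs G" "head G b = v" "b' \<in> arcs G" "head G b' = v"
    using w v as by (auto simp: is_walk_append walk_end_def)
  have "estr_before G b \<noteq> []"
  proof
    assume "estr_before G b = []"
    moreover have "last as' \<noteq> b" using ne as by simp
    ultimately show False using prefix_arc_blocks_other_walks[OF sp nr b(1,2) _ w(2) v(2)] p(2)
      by (metis Nil_is_append_conv not_Cons_self2)
  qed
  then obtain x where x: "estr_before G b = x @ [ch]"
    using p(1) as by (cases "estr_before G b" rule: rev_cases) simp_all
  have "estr_before G b' \<noteq> []"
  proof
    assume "estr_before G b' = []"
    moreover have "last as \<noteq> b'" using ne as by simp
    ultimately show False using prefix_arc_blocks_other_walks[OF sp nr b(3,4) _ w(1) v(1)] p(1)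
      by (metis Nil_is_append_conv not_Cons_self2)
  qed
  then obtain x' where x': "estr_before G b' = x' @ [ch]"
    using p(2) as by (cases "estr_before G b'" rule: rev_cases) simp_all
  have "longest_common_prefix (rev (estr G b)) (rev (estr G b')) \<noteq> rev (vstr G v)"
    using estr_before_head[OF b(1)] estr_before_head[OF b(3)] b x x'
      by (simp add: longest_common_prefix_append)
  moreover have "b \<noteq> b'" using ne as by simp
  ultimately show False using splitting_in_lcs[OF sp b(1,3)] b by (metis rev_rev_ident)
qed

section \<open>Splitting and non-redundant graphs are weakly contig-preserving\<close>

lemma circ_label_right_extension:
  assumes nr: "non_redundant G" and w: "is_walk G v es" and c: "closed_walk G c"
    and "lsubstr (Fin (walk_str G v es @ [ch])) (Cyc (circ_label G c))"
  obtains n as bs \<beta> where "repeat n c = as @ es @ bs" and "v = walk_end G (tail G (hd c)) as"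
    and "is_walk G (walk_end G v es) bs" and "concat (map (estr_after G) bs) = ch # \<beta>"
proof -
  obtain n \<alpha> \<beta> where "walk_str G (tail G (hd c)) (repeat n c) = \<alpha> @ walk_str G v es @ (ch # \<beta>)"
      "\<alpha> \<noteq> []"
    using lsubstr_circ_label_infix_repeat[OF c assms(4)]
      by (metis append.assoc append_Cons append_Nil)
  then obtain as bs where split: "repeat n c = as @ es @ bs" "v = walk_end G (tail G (hd c)) as"
      "concat (map (estr_after G) bs) = ch # \<beta>"
    using non_redundant_aligned_split[OF nr closed_walk_repeat(1)[OF c] w] by blast
  moreover have "is_walk G (walk_end G v es) bs"
    using closed_walk_repeat(1)[OF c, of n] split by (simp add: is_walk_append)
  ultimately show thesis using that by blast
qed

lemma circ_label_left_extension:
  assumes nr: "non_redundant G" and w: "is_walk G v es" and c: "closed_walk G c"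
    and "lsubstr (Fin (ch # walk_str G v es)) (Cyc (circ_label G c))"
  obtains n as bs \<alpha> where "repeat n c = as @ es @ bs" and "v = walk_end G (tail G (hd c)) as"
    and "is_walk G (tail G (hd c)) as" and "concat (map (estr_before G) as) = \<alpha> @ [ch]"
proof -
  obtain n \<alpha> \<beta> where "walk_str G (tail G (hd c)) (repeat n c) = (\<alpha> @ [ch]) @ walk_str G v es @ \<beta>"
      "\<beta> \<noteq> []"
    using lsubstr_circ_label_infix_repeat[OF c assms(4)]
      by (metis append.assoc append_Cons append_Nil)
  then obtain as bs where split: "repeat n c = as @ es @ bs" "v = walk_end G (tail G (hd c)) as"
      "concat (map (estr_before G) as) = \<alpha> @ [ch]"
    using non_redundant_aligned_split[OF nr closed_walk_repeat(1)[OF c] w] by blast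
  moreover have "is_walk G (tail G (hd c)) as"
    using closed_walk_repeat(1)[OF c, of n] split by (simp add: is_walk_append)
  ultimately show thesis using that by blast
qed

lemma common_walk_extend_right:
  assumes sp: "splitting G" and nr: "non_redundant G" and w: "is_walk G v es"
    and common: "\<forall>P\<in>PP. \<exists>c\<in>P. is_circuit G c \<and>
      lsubstr (Fin (walk_str G v es @ [ch])) (Cyc (circ_label G c))"
  obtains e where "is_walk G v (es @ [e])" and "\<forall>P\<in>PP. \<exists>c\<in>P. subwalk G (Walk v (es @ [e])) (Circ c)"
proof (cases "PP = {}")
  case True
  obtain e where "e \<in> arcs G" "tail G e = walk_end G v es"
    using assembly_graph_out_in_arcs(1)[OF assembly_graph walk_end_in_verts[OF w]] by blast
  then have "is_walk G v (es @ [e])" using w walk_end_in_verts[OF w] by (simp add: is_walk_append)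
  then show thesis using that True by simp
next
  case False
  then obtain c0 where "is_circuit G c0"
      "lsubstr (Fin (walk_str G v es @ [ch])) (Cyc (circ_label G c0))"
    using common by blast
  then obtain n0 as0 bs0 \<beta>0 where bs0: "is_walk G (walk_end G v es) bs0"
      "concat (map (estr_after G) bs0) = ch # \<beta>0"
    using circ_label_right_extension[OF nr w is_circuit_closed_walk] by metis
  define e where "e = hd bs0"
  have "bs0 \<noteq> []" using bs0(2) by (metis concat.simps(1) list.simps(8) list.distinct(1))
  then have "is_walk G v (es @ [e])"
    using w bs0(1) unfolding e_def by (cases bs0) (auto simp: is_walk_append)
  moreover have "\<exists>c\<in>P. subwalk G (Walk v (es @ [e])) (Circ c)" if "P \<in> PP" for P
  proof -
    obtain c where c: "c \<in> P" "is_circuit G c"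
        "lsubstr (Fin (walk_str G v es @ [ch])) (Cyc (circ_label G c))"
      using common \<open>P \<in> PP\<close> by blast
    then obtain n as bs \<beta> where split: "repeat n c = as @ es @ bs"
        "v = walk_end G (tail G (hd c)) as"
        and bs: "is_walk G (walk_end G v es) bs" "concat (map (estr_after G) bs) = ch # \<beta>"
      using circ_label_right_extension[OF nr w is_circuit_closed_walk] by metis
    have "hd bs = e"
      using splitting_first_arc_unique[OF sp nr bs(1) bs0(1) bs(2) bs0(2)] unfolding e_def .
    moreover have "bs \<noteq> []" using bs(2) by (metis concat.simps(1) list.simps(8) list.distinct(1))
    ultimately have "repeat n c = as @ (es @ [e]) @ tl bs" using split(1) by (cases bs) auto
    then show ?thesis using c(1) split(2) by (auto simp: sub_ww_def)
  qed
  ultimately show thesis using that by blast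
qed

lemma common_walk_extend_left:
  assumes sp: "splitting G" and nr: "non_redundant G" and w: "is_walk G v es"
    and common: "\<forall>P\<in>PP. \<exists>c\<in>P. is_circuit G c \<and>
      lsubstr (Fin (ch # walk_str G v es)) (Cyc (circ_label G c))"
  obtains e where "head G e = v" and "is_walk G (tail G e) (e # es)"
    and "\<forall>P\<in>PP. \<exists>c\<in>P. subwalk G (Walk (tail G e) (e # es)) (Circ c)"
proof (cases "PP = {}")
  case True
  obtain e where "e \<in> arcs G" "head G e = v"
    using assembly_graph_out_in_arcs(2)[OF assembly_graph is_walk_start[OF w]] by blast
  then show thesis using that w True by simp
next
  case False
  then obtain c0 where "is_circuit G c0"
      "lsubstr (Fin (ch # walk_str G v es)) (Cyc (circ_label G c0))"
    using common by blast
  then obtain n0 as0 bs0 \<alpha>0 where as0: "v = walk_end G (tail G (hd c0)) as0"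
      "is_walk G (tail G (hd c0)) as0"
      "concat (map (estr_before G) as0) = \<alpha>0 @ [ch]"
    using circ_label_left_extension[OF nr w is_circuit_closed_walk] by metis
  define e where "e = last as0"
  have "as0 \<noteq> []" using as0(3) by (metis concat.simps(1) list.simps(8) snoc_eq_iff_butlast)
  then have e: "head G e = v" "is_walk G (tail G e) [e]"
    using as0(1,2) unfolding e_def by (metis append_butlast_last_id is_walk_append walk_end_append
        walk_end_def list.distinct(1) last_ConsL is_walk.simps(2))+
  moreover have "is_walk G (tail G e) (e # es)" using e w by simp
  moreover have "\<exists>c\<in>P. subwalk G (Walk (tail G e) (e # es)) (Circ c)" if "P \<in> PP" for P
  proof -
    obtain c where c: "c \<in> P" "is_circuit G c"
        "lsubstr (Fin (ch # walk_str G v es)) (Cyc (circ_label G c))"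
      using common \<open>P \<in> PP\<close> by blast
    then obtain n as bs \<alpha> where split: "repeat n c = as @ es @ bs"
        "v = walk_end G (tail G (hd c)) as"
        and as: "is_walk G (tail G (hd c)) as" "concat (map (estr_before G) as) = \<alpha> @ [ch]"
      using circ_label_left_extension[OF nr w is_circuit_closed_walk] by metis
    have "last as = e"
      using splitting_last_arc_unique[OF sp nr as(1) as0(2) split(2)[symmetric] as0(1)[symmetric]
          as(2) as0(3)]
      unfolding e_def .
    moreover have "as \<noteq> []" using as(2) by (metis concat.simps(1) list.simps(8) snoc_eq_iff_butlast)
    ultimately obtain r where r: "as = r @ [e]" by (metis append_butlast_last_id)
    then have "repeat n c = r @ (e # es) @ bs" and "tail G e = walk_end G (tail G (hd c)) r"
      using split(1) as(1) by (auto simp: is_walk_append)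
    then show ?thesis using c(1) by (auto simp: sub_ww_def)
  qed
  ultimately show thesis using that by blast
qed

lemma OGA_Circ_label_in_OA:
  assumes "\<forall>P\<in>PP. genome_path_candidate G P" and "Circ cs \<in> OGA G PP"
  shows "Cyc (circ_label G cs) \<in> OA (Labels_gpc G ` PP)"
  unfolding OA_Labels_gpc_iff
proof (intro conjI allI impI ballI)
  fix P assume "P \<in> PP"
  then obtain c n where c: "c \<in> P" "is_circuit G c" "cs = rotate n c"
    using assms unfolding OGA_def genome_path_candidate_def by fastforce
  have "circ_label G cs = circ_label G c"
    using assms(2) c circ_label_eq[OF is_circuit_closed_walk] cyc_concat_map_rotate
    unfolding OGA_def circ_word_def by auto
  then show "\<exists>c\<in>P. lsubstr (Cyc (circ_label G cs)) (Cyc (circ_label G c))" using c(1) by auto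
next
  fix t assume "(\<forall>P\<in>PP. \<exists>c\<in>P. lsubstr t (Cyc (circ_label G c))) \<and> lsubstr (Cyc (circ_label G cs)) t"
  then show "lsubstr t (Cyc (circ_label G cs))" by (cases t) auto
qed

lemma OGA_Walk_label_maximal:
  assumes sp: "splitting G" and nr: "non_redundant G"
    and gpc: "\<forall>P\<in>PP. genome_path_candidate G P" and W: "Walk v es \<in> OGA G PP"
    and t: "\<forall>P\<in>PP. \<exists>c\<in>P. lsubstr t (Cyc (circ_label G c))" and "lsubstr (Fin (walk_str G v es)) t"
  shows "lsubstr t (Fin (walk_str G v es))"
proof (rule ccontr)
  have w: "is_walk G v es" using W unfolding OGA_def by simp
  have circ: "\<forall>P\<in>PP. \<forall>c\<in>P. is_circuit G c"
    using gpc genome_path_candidate_circuit by blast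
  assume "\<not> lsubstr t (Fin (walk_str G v es))"
  then obtain ch
    where "lsubstr (Fin (walk_str G v es @ [ch])) t \<or> lsubstr (Fin (ch # walk_str G v es)) t"
    using lsubstr_Fin_proper_extend assms(6) by blast
  then show False
  proof
    assume "lsubstr (Fin (walk_str G v es @ [ch])) t"
    then have "\<forall>P\<in>PP. \<exists>c\<in>P. is_circuit G c \<and>
        lsubstr (Fin (walk_str G v es @ [ch])) (Cyc (circ_label G c))"
      using t circ lsubstr_trans by metis
    then obtain e where e: "is_walk G v (es @ [e])"
        "\<forall>P\<in>PP. \<exists>c\<in>P. subwalk G (Walk v (es @ [e])) (Circ c)"
      using common_walk_extend_right[OF sp nr w] by blast
    have "sub_ww G v es v (es @ [e])"
      unfolding sub_ww_def by (intro exI[of _ "[]"] exI[of _ "[e]"]) (simp add: walk_end_def)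
    from OGA_Walk_no_longer_common_superwalk[OF W e this] show False by simp
  next
    assume "lsubstr (Fin (ch # walk_str G v es)) t"
    then have "\<forall>P\<in>PP. \<exists>c\<in>P. is_circuit G c \<and>
        lsubstr (Fin (ch # walk_str G v es)) (Cyc (circ_label G c))"
      using t circ lsubstr_trans by metis
    then obtain e where e: "head G e = v" "is_walk G (tail G e) (e # es)"
        "\<forall>P\<in>PP. \<exists>c\<in>P. subwalk G (Walk (tail G e) (e # es)) (Circ c)"
      using common_walk_extend_left[OF sp nr w] by blast
    have "sub_ww G v es (tail G e) (e # es)"
      unfolding sub_ww_def by (intro exI[of _ "[e]"] exI[of _ "[]"]) (simp add: walk_end_def e(1))
    from OGA_Walk_no_longer_common_superwalk[OF W e(2,3) this] show False by simp
  qed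
qed

lemma OGA_Walk_label_in_OA:
  assumes sp: "splitting G" and nr: "non_redundant G"
    and gpc: "\<forall>P\<in>PP. genome_path_candidate G P" and W: "Walk v es \<in> OGA G PP"
  shows "Fin (walk_str G v es) \<in> OA (Labels_gpc G ` PP)"
proof -
  have "\<exists>c\<in>P. lsubstr (Fin (walk_str G v es)) (Cyc (circ_label G c))" if "P \<in> PP" for P
  proof -
    obtain c where "c \<in> P" "subwalk G (Walk v es) (Circ c)"
      using W \<open>P \<in> PP\<close> unfolding OGA_def by blast
    then show ?thesis
      using subwalk_circ_lsubstr is_circuit_closed_walk genome_path_candidate_circuit gpc \<open>P \<in> PP\<close>
      by blast
  qed
  then show ?thesis unfolding OA_Labels_gpc_iff using OGA_Walk_label_maximal[OF assms] by blast
qed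

lemma weakly_contig_preserving_if_splitting:
  assumes "splitting G" and "non_redundant G"
  shows "weakly_contig_preserving G"
  unfolding weakly_contig_preserving_def
proof (intro allI impI subsetI)
  fix PP s
  assume gpc: "\<forall>P\<in>PP. genome_path_candidate G P" and "s \<in> obj_label G ` OGA G PP"
  then obtain w where w: "w \<in> OGA G PP" and s: "s = obj_label G w" by blast
  show "s \<in> OA (Labels_gpc G ` PP)"
  proof (cases w)
    case (Walk v es)
    then have "is_walk G v es" using w unfolding OGA_def by simp
    then show ?thesis
      using OGA_Walk_label_in_OA[OF assms gpc] w s Walk walk_label_eq by simp
  qed (use OGA_Circ_label_in_OA[OF gpc] w s in simp)
qed

section \<open>Weakly contig-preserving graphs are splitting\<close>

lemma OGA_common_walk_ending_at_branch:
  assumes C: "is_circuit G C1" "is_circuit G C2" "distinct (map (tail G) C1)"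
      "distinct (map (tail G) C2)"
    and e: "e1 \<in> set C1" "e2 \<in> set C2" "e1 \<noteq> e2" "tail G e1 = v" "tail G e2 = v"
  obtains x es where "common_walk G C1 C2 x es" and "walk_end G x es = v"
    and "Walk x es \<in> OGA G {{C1}, {C2}}"
proof -
  have "v \<in> verts G" using e(1,4) is_circuit_arcs[OF C(1)] arc_ends by blast
  moreover have "subwalk G (Walk v []) (Circ C1)" "subwalk G (Walk v []) (Circ C2)"
    using subwalk_Circ_arc_ends(1)[OF is_circuit_closed_walk[OF C(1)] e(1)]
      subwalk_Circ_arc_ends(1)[OF is_circuit_closed_walk[OF C(2)] e(2)] e(4,5) by simp_all
  ultimately have "common_walk G C1 C2 v []" by (simp add: common_walk_def)
  moreover have "length es < length C1" if "common_walk G C1 C2 x es" for x es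
    using common_walk_shorter[OF that _ C(4) e(1,2) _ e(3)] e(4,5) \<open>e1 \<in> set C1\<close> by force
  ultimately obtain x es where W: "common_walk G C1 C2 x es" "walk_end G x es = v"
    and max: "\<And>x' es'. common_walk G C1 C2 x' es' \<Longrightarrow> walk_end G x' es' = v \<Longrightarrow> length es' \<le> length es"
    using ex_longest_common_walk[where Q = "\<lambda>x es. walk_end G x es = v"] by (metis walk_end_def)
  have "Walk x es \<in> OGA G {{C1}, {C2}}"
  proof (rule common_walk_in_OGA[OF W(1)])
    fix cs assume "subwalk G (Circ cs) (Circ C1)" "subwalk G (Circ cs) (Circ C2)"
    then show False using no_common_circuit[OF e(1,2) C(4) _ e(3)] e(4,5) by metis
  next
    fix x' es' assume W': "common_walk G C1 C2 x' es'" and "sub_ww G x es x' es'"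
    then obtain as bs where es': "es' = as @ es @ bs" "x = walk_end G x' as"
      by (auto simp: sub_ww_def)
    have "bs = []"
    proof (rule ccontr)
      assume "bs \<noteq> []"
      then obtain b bt where b: "bs = b # bt" by (meson neq_Nil_conv)
      have "is_walk G x' ((as @ es) @ b # bt)" using W' es' b unfolding common_walk_def by simp
      then have "tail G b = v"
        using W(2) es'(2) by (simp add: is_walk_append walk_end_append del: append_assoc)
      moreover have "b \<in> set C1" "b \<in> set C2"
        using W' es' b subwalk_Circ_set unfolding common_walk_def by fastforce+
      ultimately show False using C(3,4) e by (metis distinct_map inj_onD)
    qed
    then have "length es' \<le> length es"
      using max[OF W'] W(2) es' by (simp add: walk_end_append)
    then have "as = []" using es' \<open>bs = []\<close> by simp
    then show "x' = x \<and> es' = es" using es' \<open>bs = []\<close> by (simp add: walk_end_def)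
  qed
  then show thesis using that W by blast
qed

lemma OGA_common_walk_starting_at_merge:
  assumes C: "is_circuit G C1" "is_circuit G C2" "distinct (map (head G) C1)"
      "distinct (map (head G) C2)"
    and e: "e1 \<in> set C1" "e2 \<in> set C2" "e1 \<noteq> e2" "head G e1 = v" "head G e2 = v"
  obtains es where "common_walk G C1 C2 v es" and "Walk v es \<in> OGA G {{C1}, {C2}}"
proof -
  have "v \<in> verts G" using e(1,4) is_circuit_arcs[OF C(1)] arc_ends by blast
  moreover have "subwalk G (Walk v []) (Circ C1)" "subwalk G (Walk v []) (Circ C2)"
    using subwalk_Circ_arc_ends(2)[OF is_circuit_closed_walk[OF C(1)] e(1)]
      subwalk_Circ_arc_ends(2)[OF is_circuit_closed_walk[OF C(2)] e(2)] e(4,5) by simp_all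
  ultimately have "common_walk G C1 C2 v []" by (simp add: common_walk_def)
  moreover have "length es < length C1" if "common_walk G C1 C2 x es" for x es
    using common_walk_shorter[OF that _ C(4) e(1,2) _ e(3)] e(4,5) \<open>e1 \<in> set C1\<close> by force
  ultimately obtain x es where W: "common_walk G C1 C2 x es" "x = v"
    and max: "\<And>x' es'. common_walk G C1 C2 x' es' \<Longrightarrow> x' = v \<Longrightarrow> length es' \<le> length es"
    using ex_longest_common_walk[where Q = "\<lambda>x es. x = v"] by metis
  have "Walk x es \<in> OGA G {{C1}, {C2}}"
  proof (rule common_walk_in_OGA[OF W(1)])
    fix cs assume "subwalk G (Circ cs) (Circ C1)" "subwalk G (Circ cs) (Circ C2)"
    then show False using no_common_circuit[OF e(1,2) C(4) _ e(3)] e(4,5) by metis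
  next
    fix x' es' assume W': "common_walk G C1 C2 x' es'" and "sub_ww G x es x' es'"
    then obtain as bs where es': "es' = as @ es @ bs" "x = walk_end G x' as"
      by (auto simp: sub_ww_def)
    have "as = []"
    proof (rule ccontr)
      assume "as \<noteq> []"
      then obtain ar a where a: "as = ar @ [a]" by (cases as rule: rev_cases) auto
      then have "head G a = v" using es'(2) W(2) by (simp add: walk_end_def)
      moreover have "a \<in> set C1" "a \<in> set C2"
        using W' es' a subwalk_Circ_set unfolding common_walk_def by fastforce+
      ultimately show False using C(3,4) e by (metis distinct_map inj_onD)
    qed
    then have "x' = v" using es'(2) W(2) by (simp add: walk_end_def)
    then have "length es' \<le> length es" using max[OF W'] by simp
    then show "x' = x \<and> es' = es" using es' \<open>as = []\<close> \<open>x' = v\<close> W(2) by simp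
  qed
  then show thesis using that W by blast
qed

lemma weakly_contig_preserving_two_circuitsD:
  assumes wcp: "weakly_contig_preserving G" and C: "is_circuit G C1" "is_circuit G C2"
    and W: "Walk x es \<in> OGA G {{C1}, {C2}}"
    and t: "lsubstr (Fin t) (Cyc (circ_label G C1))" "lsubstr (Fin t) (Cyc (circ_label G C2))"
    and "sublist (walk_str G x es) t"
  shows "t = walk_str G x es"
proof -
  have "\<forall>P\<in>{{C1}, {C2}}. genome_path_candidate G P"
    using C unfolding genome_path_candidate_def by auto
  then have "obj_label G (Walk x es) \<in> OA (Labels_gpc G ` {{C1}, {C2}})"
    using wcp W unfolding weakly_contig_preserving_def by blast
  moreover have "is_walk G x es" using W unfolding OGA_def by simp
  ultimately have "Fin (walk_str G x es) \<in> OA (Labels_gpc G ` {{C1}, {C2}})"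
    using walk_label_eq by simp
  moreover have "\<forall>C\<in>Labels_gpc G ` {{C1}, {C2}}. \<exists>c\<in>C. lsubstr (Fin t) (Cyc c)"
    using t unfolding Labels_gpc_def by auto
  ultimately show ?thesis using OA_Fin_common_superstring assms(7) by blast
qed

lemma weakly_contig_preserving_out_arcs:
  assumes wcp: "weakly_contig_preserving G"
    and e: "e1 \<in> arcs G" "e2 \<in> arcs G" "e1 \<noteq> e2" "tail G e1 = v" "tail G e2 = v"
    and after: "estr_after G e1 = ch # y1" "estr_after G e2 = ch # y2"
  shows False
proof -
  obtain C1 where C1: "is_circuit G C1" "e1 \<in> set C1" "distinct (map (tail G) C1)"
    using arc_on_circuit[OF e(1)] by blast
  obtain C2 where C2: "is_circuit G C2" "e2 \<in> set C2" "distinct (map (tail G) C2)"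
    using arc_on_circuit[OF e(2)] by blast
  obtain x es where W: "common_walk G C1 C2 x es" "walk_end G x es = v"
      "Walk x es \<in> OGA G {{C1}, {C2}}"
    using OGA_common_walk_ending_at_branch[OF C1(1) C2(1) C1(3) C2(3) C1(2) C2(2) e(3-5)] by blast
  have ext: "lsubstr (Fin (walk_str G x es @ [ch])) (Cyc (circ_label G C))"
    if "is_circuit G C" "distinct (map (tail G) C)" "e \<in> set C" "subwalk G (Walk x es) (Circ C)"
      "tail G e = v" "estr_after G e = ch # y" for C e y
  proof -
    have sub: "subwalk G (Walk x (es @ [e])) (Circ C)"
      using subwalk_Circ_extend_right[OF is_circuit_closed_walk[OF that(1)] that(2-4)] that(5) W(2)
        by simp
    have "walk_str G x (es @ [e]) = [] @ (walk_str G x es @ [ch]) @ y"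
      using that(6) by (simp add: walk_str_append)
    then have "sublist (walk_str G x es @ [ch]) (walk_str G x (es @ [e]))"
      by (metis sublist_appendI)
    then show ?thesis
      using lsubstr_Fin_Cyc_sublist subwalk_circ_lsubstr[OF is_circuit_closed_walk[OF that(1)] sub]
        by blast
  qed
  have "subwalk G (Walk x es) (Circ C1)" "subwalk G (Walk x es) (Circ C2)"
    using W(1) unfolding common_walk_def by simp_all
  moreover have "sublist (walk_str G x es) (walk_str G x es @ [ch])"
    by (metis append_Nil sublist_appendI)
  ultimately have "walk_str G x es @ [ch] = walk_str G x es"
    using weakly_contig_preserving_two_circuitsD[OF wcp C1(1) C2(1) W(3)]
      ext[OF C1(1,3,2) _ e(4) after(1)] ext[OF C2(1,3,2) _ e(5) after(2)] by blast
  then show False by simp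
qed

lemma weakly_contig_preserving_in_arcs:
  assumes wcp: "weakly_contig_preserving G"
    and e: "e1 \<in> arcs G" "e2 \<in> arcs G" "e1 \<noteq> e2" "head G e1 = v" "head G e2 = v"
    and before: "estr_before G e1 = y1 @ [ch]" "estr_before G e2 = y2 @ [ch]"
  shows False
proof -
  obtain C1 where C1: "is_circuit G C1" "e1 \<in> set C1" "distinct (map (head G) C1)"
    using arc_on_circuit[OF e(1)] by blast
  obtain C2 where C2: "is_circuit G C2" "e2 \<in> set C2" "distinct (map (head G) C2)"
    using arc_on_circuit[OF e(2)] by blast
  obtain es where W: "common_walk G C1 C2 v es" "Walk v es \<in> OGA G {{C1}, {C2}}"
    using OGA_common_walk_starting_at_merge[OF C1(1) C2(1) C1(3) C2(3) C1(2) C2(2) e(3-5)] by blast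
  have ext: "lsubstr (Fin (ch # walk_str G v es)) (Cyc (circ_label G C))"
    if "is_circuit G C" "distinct (map (head G) C)" "e \<in> set C" "subwalk G (Walk v es) (Circ C)"
      "head G e = v" "estr_before G e = y @ [ch]" for C e y
  proof -
    have sub: "subwalk G (Walk (tail G e) (e # es)) (Circ C)"
      using subwalk_Circ_extend_left[OF is_circuit_closed_walk[OF that(1)] that(2-5)] .
    have "is_walk G (tail G e) ([e] @ es)"
      using W(1) that(3,5) is_circuit_arcs[OF that(1)] unfolding common_walk_def by auto
    then have "walk_str G (tail G e) (e # es) = y @ (ch # walk_str G v es) @ []"
      using walk_str_split[of "tail G e" "[e]" es] that(5,6) by (simp add: walk_end_def)
    then have "sublist (ch # walk_str G v es) (walk_str G (tail G e) (e # es))"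
      by (metis sublist_appendI)
    then show ?thesis
      using lsubstr_Fin_Cyc_sublist subwalk_circ_lsubstr[OF is_circuit_closed_walk[OF that(1)] sub]
        by blast
  qed
  have "subwalk G (Walk v es) (Circ C1)" "subwalk G (Walk v es) (Circ C2)"
    using W(1) unfolding common_walk_def by simp_all
  moreover have "sublist (walk_str G v es) (ch # walk_str G v es)"
    by (metis append_Cons append_Nil append_Nil2 sublist_appendI)
  ultimately have "ch # walk_str G v es = walk_str G v es"
    using weakly_contig_preserving_two_circuitsD[OF wcp C1(1) C2(1) W(2)]
      ext[OF C1(1,3,2) _ e(4) before(1)] ext[OF C2(1,3,2) _ e(5) before(2)] by blast
  then show False by simp
qed

lemma splitting_if_weakly_contig_preserving:
  assumes wcp: "weakly_contig_preserving G"
  shows "splitting G"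
  unfolding splitting_def
proof (intro conjI ballI impI)
  fix v e1 e2
  assume "v \<in> verts G" "e1 \<in> arcs G" "e2 \<in> arcs G" and e: "e1 \<noteq> e2 \<and> tail G e1 = v \<and> tail G e2 = v"
  moreover have "longest_common_prefix (estr_after G e1) (estr_after G e2) = []"
    using weakly_contig_preserving_out_arcs[OF wcp \<open>e1 \<in> arcs G\<close> \<open>e2 \<in> arcs G\<close>] e
      longest_common_prefix_neq_Nil by blast
  ultimately show "llcp (elab G e1) (elab G e2) = vlab G v"
    using estr_tail_after elab_Fin vlab_Fin by (simp add: longest_common_prefix_append)
next
  fix u e1 e2
  assume "u \<in> verts G" "e1 \<in> arcs G" "e2 \<in> arcs G" and e: "e1 \<noteq> e2 \<and> head G e1 = u \<and> head G e2 = u"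
  moreover have "longest_common_prefix (rev (estr_before G e1)) (rev (estr_before G e2)) = []"
    using weakly_contig_preserving_in_arcs[OF wcp \<open>e1 \<in> arcs G\<close> \<open>e2 \<in> arcs G\<close>] e
      longest_common_prefix_neq_Nil by (metis rev_eq_Cons_iff)
  ultimately show "llcs (elab G e1) (elab G e2) = vlab G u"
    using estr_before_head elab_Fin vlab_Fin by (simp add: longest_common_prefix_append)
qed

end

theorem theorem2:
  fixes G :: "('v, 'e, 'a::finite) agraph"
  shows "(assembly_graph G \<and> weakly_contig_preserving G \<longrightarrow> splitting G) \<and>
         (assembly_graph G \<and> splitting G \<and> non_redundant G \<longrightarrow> weakly_contig_preserving G)"
  using assembly.splitting_if_weakly_contig_preserving
    assembly.weakly_contig_preserving_if_splitting
  unfolding assembly_def by blast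

end
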